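(* Let $\mathcal{A}$ be the ring of adeles of $\mathbb{Q}$ with $\mathbb{Q}^*$ acting by multiplication through the diagonal embedding. If $a\in\mathcal{A}$ is not invertible, then $$\overline{\mathbb{Q}^*a}=\{b\in\mathcal{A}: \text{for every } p\in\mathcal{P}\cup\{\infty\},\ a_p=0\implies b_p=0\}.$$
   Context: $\mathcal{P}$ is the set of primes. $\mathcal{A}=\mathcal{A}_f\times\mathbb{R}$, where $\mathcal{A}_f=\{(a_p)\in\prod_{p\in\mathcal{P}}\mathbb{Q}_p: a_p\in\mathbb{Z}_p\text{ for almost all }p\}$ with the restricted product topology; $\mathcal{A}$ has the product topology and componentwise operations, $\mathbb{Q}$ embedded diagonally. For $a\in\mathcal{A}$ write $a=((a_p)_{p\in\mathcal{P}},a_\infty)$. An adele is invertible iff all $a_p\ne0$, $a_\infty\ne0$ and $a_p\in\mathbb{Z}_p^*$ for almost all $p$. *)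

theory Defs
  imports "HOL-Analysis.Analysis" "HOL-Computational_Algebra.Computational_Algebra"
begin

definition pval :: "nat \<Rightarrow> rat \<Rightarrow> int" where
  "pval p q = int (multiplicity (int p) (fst (quotient_of q)))
            - int (multiplicity (int p) (snd (quotient_of q)))"

definition padic_abs :: "nat \<Rightarrow> rat \<Rightarrow> real" where
  "padic_abs p q = (if q = 0 then 0 else real p powr (- real_of_int (pval p q)))"

definition pcauchy :: "nat \<Rightarrow> (nat \<Rightarrow> rat) \<Rightarrow> bool" where
  "pcauchy p X \<longleftrightarrow> (\<forall>e>0. \<exists>N. \<forall>m\<ge>N. \<forall>n\<ge>N. padic_abs p (X m - X n) < e)"

definition pequiv :: "nat \<Rightarrow> (nat \<Rightarrow> rat) \<Rightarrow> (nat \<Rightarrow> rat) \<Rightarrow> bool" where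
  "pequiv p X Y \<longleftrightarrow> (\<lambda>n. padic_abs p (X n - Y n)) \<longlonglongrightarrow> 0"

type_synonym padic = "(nat \<Rightarrow> rat) set"

definition pclass :: "nat \<Rightarrow> (nat \<Rightarrow> rat) \<Rightarrow> padic" where
  "pclass p X = {Y. pcauchy p Y \<and> pequiv p X Y}"

definition Qp :: "nat \<Rightarrow> padic set" where
  "Qp p = {pclass p X | X. pcauchy p X}"

definition prep :: "padic \<Rightarrow> nat \<Rightarrow> rat" where
  "prep x = (SOME X. X \<in> x)"

definition pof_rat :: "nat \<Rightarrow> rat \<Rightarrow> padic" where
  "pof_rat p q = pclass p (\<lambda>_. q)"

definition pmul :: "nat \<Rightarrow> padic \<Rightarrow> padic \<Rightarrow> padic" where
  "pmul p x y = pclass p (\<lambda>n. prep x n * prep y n)"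

definition pdist :: "nat \<Rightarrow> padic \<Rightarrow> padic \<Rightarrow> real" where
  "pdist p x y = lim (\<lambda>n. padic_abs p (prep x n - prep y n))"

definition Zp :: "nat \<Rightarrow> padic set" where
  "Zp p = {x \<in> Qp p. pdist p x (pof_rat p 0) \<le> 1}"

definition padic_open :: "nat \<Rightarrow> padic set \<Rightarrow> bool" where
  "padic_open p U \<longleftrightarrow> U \<subseteq> Qp p \<and>
     (\<forall>x\<in>U. \<exists>e>0. \<forall>y\<in>Qp p. pdist p x y < e \<longrightarrow> y \<in> U)"

text \<open>An adele is a pair (finite part indexed by primes, real component).
  Components at non-primes are fixed to the empty set (dummy value).\<close>
type_synonym adele = "(nat \<Rightarrow> padic) \<times> real"

definition adeles :: "adele set" where
  "adeles = {(af, r). (\<forall>p. prime p \<longrightarrow> af p \<in> Qp p) \<and> (\<forall>p. \<not> prime p \<longrightarrow> af p = {})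
                     \<and> finite {p. prime p \<and> af p \<notin> Zp p}}"

definition adele_mul :: "adele \<Rightarrow> adele \<Rightarrow> adele" where
  "adele_mul a b = ((\<lambda>p. if prime p then pmul p (fst a p) (fst b p) else {}), snd a * snd b)"

definition adele_of_rat :: "rat \<Rightarrow> adele" where
  "adele_of_rat q = ((\<lambda>p. if prime p then pof_rat p q else {}), of_rat q)"

definition adele_invertible :: "adele \<Rightarrow> bool" where
  "adele_invertible a \<longleftrightarrow> (\<exists>b\<in>adeles. adele_mul a b = adele_of_rat 1)"

definition adele_basic_opens :: "adele set set" where
  "adele_basic_opens = {{a \<in> adeles. (\<forall>p. prime p \<longrightarrow> fst a p \<in> U p) \<and> snd a \<in> V} | U V.
      (\<forall>p. prime p \<longrightarrow> padic_open p (U p)) \<and> finite {p. prime p \<and> U p \<noteq> Zp p} \<and> open V}"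

definition adele_topology :: "adele topology" where
  "adele_topology = topology_generated_by adele_basic_opens"

end

theory Submission
  imports Defs "HOL-Number_Theory.Number_Theory"
begin

text \<open>
  Since \<open>(q a)\<^sub>v = 0\<close> wherever \<open>a\<^sub>v = 0\<close>, and \<open>b\<^sub>v \<noteq> 0\<close> is an open condition on \<open>b\<close>, the
  closure of \<open>\<rat>\<^sup>* a\<close> lies in the right-hand side. Conversely, a basic neighbourhood of such a
  \<open>b\<close> asks for \<open>q a\<^sub>p\<close> to lie in given open sets at a finite set \<open>G\<close> of primes, for \<open>q a\<^sub>p\<close> to be
  integral at the other primes, and for \<open>q a\<^sub>\<infinity>\<close> to be close to \<open>b\<^sub>\<infinity>\<close>. At the primes of \<open>G\<close>
  where \<open>a\<^sub>p \<noteq> 0\<close> this holds once \<open>q\<close> is \<open>p\<close>-adically close to suitable rationals, which by the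
  Chinese remainder theorem is achieved by \<open>q = m / (P D)\<close> for all \<open>m\<close> in a residue class modulo
  some \<open>M\<close>, whenever \<open>D\<close> is prime to \<open>G\<close>. Integrality elsewhere holds if \<open>|a\<^sub>p|\<^sub>p \<le> |D|\<^sub>p\<close>,
  and choosing \<open>m\<close> in its class puts \<open>q\<close> within \<open>M / D\<close> of \<open>b\<^sub>\<infinity> / a\<^sub>\<infinity>\<close>. Non-invertibility
  of \<open>a\<close> supplies such denominators \<open>D\<close> of any size: either \<open>a\<^sub>\<infinity> = 0\<close> and no \<open>D\<close> is needed,
  or some \<open>a\<^sub>p\<^sub>0 = 0\<close> and \<open>D = p\<^sub>0\<^sup>j\<close> works, or infinitely many \<open>a\<^sub>p\<close> are non-units and \<open>D\<close> can
  be a product of arbitrarily many of those primes.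
\<close>

section \<open>\<open>p\<close>-adic absolute values and the completions \<open>\<rat>\<^sub>p\<close>\<close>

definition padic_abs_lim :: "nat \<Rightarrow> (nat \<Rightarrow> rat) \<Rightarrow> real" where
  "padic_abs_lim p X = lim (\<lambda>n. padic_abs p (X n))"

abbreviation padic_norm :: "nat \<Rightarrow> padic \<Rightarrow> real" where
  "padic_norm p x \<equiv> pdist p x (pof_rat p 0)"

lemma Zp_iff: "x \<in> Zp p \<longleftrightarrow> x \<in> Qp p \<and> padic_norm p x \<le> 1"
  unfolding Zp_def by simp

context
  fixes p :: nat
  assumes prime_p: "prime p"
begin

lemma p_gt_1: "real p > 1"
  using prime_gt_1_nat[OF prime_p] by simp

lemma int_p_not_unit: "\<not> is_unit (int p)"
  using prime_p not_prime_unit by (metis prime_nat_int_transfer)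

lemma pval_of_int_divide:
  assumes "a \<noteq> 0" "b \<noteq> 0"
  shows "pval p (of_int a / of_int b) = int (multiplicity (int p) a) - int (multiplicity (int p) b)"
proof -
  obtain n d where nd: "quotient_of (of_int a / of_int b) = (n, d)"
    by (cases "quotient_of (of_int a / of_int b :: rat)")
  have d: "d > 0" using quotient_of_denom_pos[OF nd] .
  have eq: "of_int a / of_int b = (of_int n / of_int d :: rat)" using quotient_of_div[OF nd] .
  have n: "n \<noteq> 0" using eq assms d by auto
  have "(of_int (a * d) :: rat) = of_int (n * b)" using eq assms d
    by (simp add: field_simps)
  then have "multiplicity (int p) (a * d) = multiplicity (int p) (n * b)" by (simp only: of_int_eq_iff)
  then have "multiplicity (int p) a + multiplicity (int p) d = multiplicity (int p) n + multiplicity (int p) b"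
    using prime_p assms n d by (simp add: prime_elem_multiplicity_mult_distrib)
  then show ?thesis unfolding pval_def nd by simp
qed

lemma rat_nonzero_int_divide:
  fixes r :: rat
  assumes "r \<noteq> 0"
  obtains a b where "a \<noteq> 0" "b \<noteq> 0" "r = of_int a / of_int b"
proof -
  obtain n d where nd: "quotient_of r = (n, d)" by (cases "quotient_of r")
  have "d > 0" using quotient_of_denom_pos[OF nd] .
  moreover have "r = of_int n / of_int d" using quotient_of_div[OF nd] .
  ultimately show ?thesis using that[of n d] assms by (cases "n = 0") auto
qed

lemma multiplicity_add_ge_min:
  assumes "x + y \<noteq> (0::int)"
  shows "min (multiplicity (int p) x) (multiplicity (int p) y) \<le> multiplicity (int p) (x + y)"
proof -
  let ?k = "min (multiplicity (int p) x) (multiplicity (int p) y)"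
  have "int p ^ ?k dvd x" "int p ^ ?k dvd y" by (auto intro: multiplicity_dvd')
  then have "int p ^ ?k dvd x + y" by simp
  then show ?thesis using multiplicity_geI[OF assms int_p_not_unit] by blast
qed

lemma pval_mult:
  assumes "r \<noteq> 0" "s \<noteq> 0"
  shows "pval p (r * s) = pval p r + pval p s"
proof -
  obtain a b where ab: "a \<noteq> 0" "b \<noteq> 0" "r = of_int a / of_int b"
    using rat_nonzero_int_divide assms(1) by metis
  obtain c d where cd: "c \<noteq> 0" "d \<noteq> 0" "s = of_int c / of_int d"
    using rat_nonzero_int_divide assms(2) by metis
  have "r * s = of_int (a * c) / of_int (b * d)" using ab cd by simp
  moreover have "pval p (of_int (a * c) / of_int (b * d))
      = int (multiplicity (int p) (a * c)) - int (multiplicity (int p) (b * d))"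
    using ab cd by (intro pval_of_int_divide) auto
  ultimately show ?thesis
    using ab cd prime_p by (simp add: pval_of_int_divide prime_elem_multiplicity_mult_distrib)
qed

lemma pval_add_ge_min:
  assumes "r \<noteq> 0" "s \<noteq> 0" "r + s \<noteq> 0"
  shows "min (pval p r) (pval p s) \<le> pval p (r + s)"
proof -
  obtain a b where ab: "a \<noteq> 0" "b \<noteq> 0" "r = of_int a / of_int b"
    using rat_nonzero_int_divide assms(1) by metis
  obtain c d where cd: "c \<noteq> 0" "d \<noteq> 0" "s = of_int c / of_int d"
    using rat_nonzero_int_divide assms(2) by metis
  have rs: "r + s = of_int (a * d + c * b) / of_int (b * d)" using ab cd by (simp add: field_simps)
  have ne: "a * d + c * b \<noteq> 0" using rs assms(3) by (metis div_0 of_int_0)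
  let ?m = "multiplicity (int p)"
  have "min (?m (a * d)) (?m (c * b)) \<le> ?m (a * d + c * b)"
    using multiplicity_add_ge_min ne by blast
  moreover have "?m (a * d) = ?m a + ?m d" "?m (c * b) = ?m c + ?m b" "?m (b * d) = ?m b + ?m d"
    using ab cd prime_p by (simp_all add: prime_elem_multiplicity_mult_distrib)
  moreover have "pval p (r + s) = int (?m (a * d + c * b)) - int (?m (b * d))"
    unfolding rs using ab cd ne by (intro pval_of_int_divide) auto
  ultimately show ?thesis
    using ab cd by (simp add: pval_of_int_divide min_def split: if_splits)
qed

lemma padic_abs_nonzero: "r \<noteq> 0 \<Longrightarrow> padic_abs p r = real p powr (- real_of_int (pval p r))"
  by (simp add: padic_abs_def)

lemma padic_abs_pos: "r \<noteq> 0 \<Longrightarrow> padic_abs p r > 0"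
  using p_gt_1 by (simp add: padic_abs_def)

lemma padic_abs_nonneg [simp]: "padic_abs p r \<ge> 0"
  using padic_abs_pos[of r] by (cases "r = 0") (auto simp: padic_abs_def)

lemma padic_abs_0 [simp]: "padic_abs p 0 = 0"
  by (simp add: padic_abs_def)

lemma padic_abs_eq_0_iff [simp]: "padic_abs p r = 0 \<longleftrightarrow> r = 0"
  by (metis padic_abs_pos padic_abs_0 less_irrefl)

lemma padic_abs_mult: "padic_abs p (r * s) = padic_abs p r * padic_abs p s"
  using pval_mult[of r s] p_gt_1 by (simp add: padic_abs_def powr_add[symmetric] algebra_simps)

lemma padic_abs_1 [simp]: "padic_abs p 1 = 1"
  using p_gt_1 by (simp add: padic_abs_def pval_def)

lemma padic_abs_minus [simp]: "padic_abs p (- r) = padic_abs p r"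
proof -
  have "padic_abs p (-1) * padic_abs p (-1) = 1" using padic_abs_mult[of "-1" "-1"] by simp
  then have "(padic_abs p (-1) - 1) * (padic_abs p (-1) + 1) = 0" by (simp add: algebra_simps)
  moreover have "padic_abs p (-1) + 1 > 0" using padic_abs_nonneg[of "-1"] by linarith
  ultimately have "padic_abs p (-1) = 1" by simp
  then show ?thesis using padic_abs_mult[of "-1" r] by simp
qed

lemma padic_abs_minus_commute: "padic_abs p (r - s) = padic_abs p (s - r)"
  using padic_abs_minus[of "r - s"] by simp

lemma padic_abs_add_le_max: "padic_abs p (r + s) \<le> max (padic_abs p r) (padic_abs p s)"
proof (cases "r = 0 \<or> s = 0 \<or> r + s = 0")
  case False
  then have "pval p r \<le> pval p (r + s) \<or> pval p s \<le> pval p (r + s)"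
    using pval_add_ge_min[of r s] by linarith
  then have "real p powr (- real_of_int (pval p (r + s))) \<le> real p powr (- real_of_int (pval p r))
      \<or> real p powr (- real_of_int (pval p (r + s))) \<le> real p powr (- real_of_int (pval p s))"
    using p_gt_1 by (auto intro: powr_mono)
  then show ?thesis using False by (auto simp: padic_abs_nonzero le_max_iff_disj)
qed (auto simp: le_max_iff_disj)

lemma padic_abs_diff_le_max: "padic_abs p (r - s) \<le> max (padic_abs p r) (padic_abs p s)"
  using padic_abs_add_le_max[of r "- s"] by simp

lemma padic_abs_triangle: "padic_abs p (r + s) \<le> padic_abs p r + padic_abs p s"
  using padic_abs_add_le_max[of r s] padic_abs_nonneg[of r] padic_abs_nonneg[of s] by linarith

lemma padic_abs_diff_triangle: "padic_abs p (r - t) \<le> padic_abs p (r - s) + padic_abs p (s - t)"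
  using padic_abs_triangle[of "r - s" "s - t"] by simp

lemma abs_padic_abs_diff_le: "\<bar>padic_abs p r - padic_abs p s\<bar> \<le> padic_abs p (r - s)"
  using padic_abs_triangle[of s "r - s"] padic_abs_triangle[of r "s - r"]
    padic_abs_minus_commute[of s r] by simp

lemma padic_abs_divide: "padic_abs p (r / s) = padic_abs p r / padic_abs p s"
proof (cases "s = 0")
  case False
  have "padic_abs p r = padic_abs p (r / s) * padic_abs p s"
    using padic_abs_mult[of "r / s" s] False by simp
  then show ?thesis using padic_abs_pos[OF False] by (simp add: field_simps)
qed simp

lemma padic_abs_inverse: "padic_abs p (inverse r) = inverse (padic_abs p r)"
  using padic_abs_divide[of 1 r] by (simp add: inverse_eq_divide)

lemma padic_abs_of_int:
  "n \<noteq> 0 \<Longrightarrow> padic_abs p (of_int n) = real p powr (- real (multiplicity (int p) n))"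
  using p_gt_1 by (simp add: padic_abs_def pval_def)

lemma padic_abs_of_int_le_1: "padic_abs p (of_int n) \<le> 1"
proof (cases "n = 0")
  case False
  have "real p powr (- real (multiplicity (int p) n)) \<le> real p powr 0"
    using p_gt_1 by (intro powr_mono) auto
  then show ?thesis using False p_gt_1 by (simp add: padic_abs_of_int)
qed simp

lemma padic_abs_of_int_le_if_dvd:
  assumes "int p ^ k dvd n"
  shows "padic_abs p (of_int n) \<le> real p powr (- real k)"
proof (cases "n = 0")
  case False
  then have "k \<le> multiplicity (int p) n" using multiplicity_geI[OF False int_p_not_unit] assms by blast
  then show ?thesis using False p_gt_1 by (simp add: padic_abs_of_int)
qed simp

lemma padic_abs_of_int_eq_1: "\<not> int p dvd n \<Longrightarrow> padic_abs p (of_int n) = 1"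
  using not_dvd_imp_multiplicity_0[of "int p" n] p_gt_1 by (cases "n = 0") (auto simp: padic_abs_of_int)

lemma padic_abs_of_nat_le_if_dvd: "p ^ k dvd D \<Longrightarrow> padic_abs p (of_nat D) \<le> real p powr (- real k)"
proof -
  assume "p ^ k dvd D"
  then have "int p ^ k dvd int D" by (metis of_nat_dvd_iff of_nat_power)
  then show ?thesis using padic_abs_of_int_le_if_dvd[of k "int D"] by simp
qed

lemma padic_abs_of_nat_eq_1: "\<not> p dvd D \<Longrightarrow> padic_abs p (of_nat D) = 1"
  using padic_abs_of_int_eq_1[of "int D"] by simp

lemma padic_abs_of_nat_self: "padic_abs p (of_nat p) = 1 / real p"
  using padic_abs_of_int[of "int p"] prime_p p_gt_1 by (simp add: powr_minus_divide)

lemma padic_abs_less_1_imp_le: "padic_abs p r < 1 \<Longrightarrow> padic_abs p r \<le> 1 / real p"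
proof (cases "r = 0")
  case False
  assume "padic_abs p r < 1"
  have "pval p r \<ge> 1"
  proof (rule ccontr)
    assume "\<not> pval p r \<ge> 1"
    then have "1 \<le> real p powr (- real_of_int (pval p r))"
      using p_gt_1 by (simp add: ge_one_powr_ge_zero)
    then show False using \<open>padic_abs p r < 1\<close> False by (simp add: padic_abs_nonzero)
  qed
  then have "real p powr (- real_of_int (pval p r)) \<le> real p powr (-1)"
    using p_gt_1 by (intro powr_mono) auto
  then show ?thesis using False p_gt_1 by (simp add: padic_abs_nonzero powr_minus_divide)
qed (use p_gt_1 in simp)

lemma padic_abs_le_1_iff: "padic_abs p r \<le> 1 \<longleftrightarrow> \<not> int p dvd snd (quotient_of r)"
proof -
  obtain n d where nd: "quotient_of r = (n, d)" by (cases "quotient_of r")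
  have d: "d > 0" and r: "r = of_int n / of_int d"
    using quotient_of_denom_pos[OF nd] quotient_of_div[OF nd] by auto
  show ?thesis
  proof
    assume r1: "padic_abs p r \<le> 1"
    show "\<not> int p dvd snd (quotient_of r)"
    proof
      assume "int p dvd snd (quotient_of r)"
      then have pd: "int p dvd d" using nd by simp
      then have "\<not> int p dvd n"
        using quotient_of_coprime[OF nd] int_p_not_unit by (meson coprime_common_divisor)
      then have "padic_abs p r = 1 / padic_abs p (of_int d)"
        using r by (simp add: padic_abs_divide padic_abs_of_int_eq_1)
      moreover have "0 < padic_abs p (of_int d)" "padic_abs p (of_int d) \<le> 1 / real p"
        using padic_abs_pos d padic_abs_of_int_le_if_dvd[of 1 d] pd by (auto simp: powr_minus_divide)
      ultimately have "padic_abs p r \<ge> real p" using p_gt_1 by (simp add: field_simps)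
      then show False using r1 p_gt_1 by simp
    qed
  next
    assume "\<not> int p dvd snd (quotient_of r)"
    then have "padic_abs p (of_int d) = 1" using nd padic_abs_of_int_eq_1 by simp
    then show "padic_abs p r \<le> 1" using r padic_abs_of_int_le_1[of n] by (simp add: padic_abs_divide)
  qed
qed

text \<open>The denominator of \<open>r\<close> is prime to \<open>p\<close>, hence invertible modulo \<open>p\<^sup>K\<close> (Bezout).\<close>
lemma padic_abs_approx_by_int:
  assumes "padic_abs p r \<le> 1"
  shows "\<exists>n::int. padic_abs p (r - of_int n) \<le> real p powr (- real K)"
proof -
  obtain n0 d where nd: "quotient_of r = (n0, d)" by (cases "quotient_of r")
  have d: "d > 0" and r: "r = of_int n0 / of_int d"
    using quotient_of_denom_pos[OF nd] quotient_of_div[OF nd] by auto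
  have "\<not> int p dvd d" using padic_abs_le_1_iff assms nd by simp
  then have "coprime (int p) d" using prime_p by (intro prime_imp_coprime) auto
  then have "coprime d (int p ^ K)" by (simp add: coprime_commute)
  then obtain u v where uv: "u * d + v * int p ^ K = 1" using bezout_int[of d "int p ^ K"] by auto
  have "r - of_int (n0 * u) = of_int (n0 * v * int p ^ K) / of_int d"
  proof -
    have "(1::rat) - of_int u * of_int d = of_int (v * int p ^ K)"
      using uv by (metis add_diff_cancel_left' mult.commute of_int_1 of_int_diff of_int_mult)
    moreover have "r - of_int (n0 * u) = of_int n0 * (1 - of_int u * of_int d) / (of_int d :: rat)"
      using d r by (simp add: field_simps)
    ultimately show ?thesis by (simp add: mult.assoc)
  qed
  then have "padic_abs p (r - of_int (n0 * u)) = padic_abs p (of_int (n0 * v * int p ^ K))"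
    using padic_abs_of_int_eq_1[OF \<open>\<not> int p dvd d\<close>] by (simp add: padic_abs_divide)
  also have "\<dots> \<le> real p powr (- real K)"
    by (rule padic_abs_of_int_le_if_dvd) simp
  finally show ?thesis by blast
qed

lemma pcauchy_abs_LIMSEQ:
  assumes "pcauchy p X"
  shows "(\<lambda>n. padic_abs p (X n)) \<longlonglongrightarrow> padic_abs_lim p X"
proof -
  have "Cauchy (\<lambda>n. padic_abs p (X n))"
    unfolding Cauchy_iff
  proof (intro allI impI)
    fix e :: real assume "e > 0"
    then obtain N where N: "\<forall>m\<ge>N. \<forall>n\<ge>N. padic_abs p (X m - X n) < e"
      using assms unfolding pcauchy_def by blast
    have "norm (padic_abs p (X m) - padic_abs p (X n)) < e" if "N \<le> m" "N \<le> n" for m n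
      using N that abs_padic_abs_diff_le[of "X m" "X n"] by fastforce
    then show "\<exists>M. \<forall>m\<ge>M. \<forall>n\<ge>M. norm (padic_abs p (X m) - padic_abs p (X n)) < e"
      by blast
  qed
  then show ?thesis
    unfolding padic_abs_lim_def by (simp add: Cauchy_convergent_iff convergent_LIMSEQ_iff)
qed

lemma pcauchy_bounded:
  assumes "pcauchy p X"
  obtains B where "\<And>n. padic_abs p (X n) \<le> B"
proof -
  have "Bseq (\<lambda>n. padic_abs p (X n))"
    using pcauchy_abs_LIMSEQ[OF assms] convergent_imp_Bseq convergentI by blast
  then show ?thesis using that by (auto simp: Bseq_def)
qed

lemma pequiv_refl: "pequiv p X X"
  unfolding pequiv_def by simp

lemma pequiv_sym: "pequiv p X Y \<Longrightarrow> pequiv p Y X"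
  unfolding pequiv_def using padic_abs_minus_commute by simp

lemma pequiv_trans:
  assumes "pequiv p X Y" "pequiv p Y Z"
  shows "pequiv p X Z"
  unfolding pequiv_def
proof (rule Lim_null_comparison)
  show "\<forall>\<^sub>F n in sequentially.
      norm (padic_abs p (X n - Z n)) \<le> padic_abs p (X n - Y n) + padic_abs p (Y n - Z n)"
    using padic_abs_diff_triangle by simp
  show "(\<lambda>n. padic_abs p (X n - Y n) + padic_abs p (Y n - Z n)) \<longlonglongrightarrow> 0"
    using assms unfolding pequiv_def by (intro tendsto_add_zero)
qed

lemma pcauchy_const: "pcauchy p (\<lambda>n. c)"
  unfolding pcauchy_def by simp

lemma pcauchy_diff:
  assumes "pcauchy p X" "pcauchy p Y"
  shows "pcauchy p (\<lambda>n. X n - Y n)"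
  unfolding pcauchy_def
proof (intro allI impI)
  fix e :: real assume "e > 0"
  obtain N1 where N1: "\<forall>m\<ge>N1. \<forall>n\<ge>N1. padic_abs p (X m - X n) < e"
    using assms(1) \<open>e > 0\<close> unfolding pcauchy_def by blast
  obtain N2 where N2: "\<forall>m\<ge>N2. \<forall>n\<ge>N2. padic_abs p (Y m - Y n) < e"
    using assms(2) \<open>e > 0\<close> unfolding pcauchy_def by blast
  show "\<exists>N. \<forall>m\<ge>N. \<forall>n\<ge>N. padic_abs p (X m - Y m - (X n - Y n)) < e"
  proof (intro exI allI impI)
    fix m n assume "max N1 N2 \<le> m" "max N1 N2 \<le> n"
    then have "padic_abs p (X m - X n) < e" "padic_abs p (Y m - Y n) < e" using N1 N2 by auto
    then have "padic_abs p ((X m - X n) - (Y m - Y n)) < e"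
      using padic_abs_diff_le_max[of "X m - X n" "Y m - Y n"] by linarith
    then show "padic_abs p (X m - Y m - (X n - Y n)) < e" by (simp add: algebra_simps)
  qed
qed

lemma pcauchy_cmult:
  assumes "pcauchy p X"
  shows "pcauchy p (\<lambda>n. c * X n)"
proof (cases "c = 0")
  case True
  then show ?thesis using pcauchy_const by simp
next
  case False
  have c: "padic_abs p c > 0" using padic_abs_pos[OF False] .
  show ?thesis unfolding pcauchy_def
  proof (intro allI impI)
    fix e :: real assume "e > 0"
    then obtain N where N: "\<forall>m\<ge>N. \<forall>n\<ge>N. padic_abs p (X m - X n) < e / padic_abs p c"
      using assms c unfolding pcauchy_def by (meson divide_pos_pos)
    have "padic_abs p (c * X m - c * X n) < e" if "N \<le> m" "N \<le> n" for m n
    proof -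
      have "padic_abs p c * padic_abs p (X m - X n) < e"
        using N that c by (simp add: field_simps)
      then show ?thesis by (simp add: padic_abs_mult[symmetric] right_diff_distrib)
    qed
    then show "\<exists>N. \<forall>m\<ge>N. \<forall>n\<ge>N. padic_abs p (c * X m - c * X n) < e" by blast
  qed
qed

lemma pcauchy_add:
  assumes "pcauchy p X" "pcauchy p Y"
  shows "pcauchy p (\<lambda>n. X n + Y n)"
  using pcauchy_diff[OF assms(1) pcauchy_cmult[OF assms(2), of "-1"]] by simp

lemma pequiv_diff:
  assumes "pequiv p X X'" "pequiv p Y Y'"
  shows "pequiv p (\<lambda>n. X n - Y n) (\<lambda>n. X' n - Y' n)"
  unfolding pequiv_def
proof (rule Lim_null_comparison)
  have "padic_abs p (X n - Y n - (X' n - Y' n)) \<le> padic_abs p (X n - X' n) + padic_abs p (Y n - Y' n)"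
    for n
    using padic_abs_triangle[of "X n - X' n" "- (Y n - Y' n)"]
    by (simp add: algebra_simps padic_abs_minus_commute[of "Y' n"])
  then show "\<forall>\<^sub>F n in sequentially.
      norm (padic_abs p (X n - Y n - (X' n - Y' n))) \<le> padic_abs p (X n - X' n) + padic_abs p (Y n - Y' n)"
    by simp
  show "(\<lambda>n. padic_abs p (X n - X' n) + padic_abs p (Y n - Y' n)) \<longlonglongrightarrow> 0"
    using assms unfolding pequiv_def by (intro tendsto_add_zero)
qed

lemma pequiv_mult_left:
  assumes "pcauchy p B" "pequiv p Z W"
  shows "pequiv p (\<lambda>n. B n * Z n) (\<lambda>n. B n * W n)"
proof -
  obtain K where K: "\<And>n. padic_abs p (B n) \<le> K" using pcauchy_bounded[OF assms(1)] by blast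
  show ?thesis unfolding pequiv_def
  proof (rule Lim_null_comparison)
    have "padic_abs p (B n * Z n - B n * W n) \<le> K * padic_abs p (Z n - W n)" for n
      using K[of n] by (simp add: padic_abs_mult right_diff_distrib[symmetric]
          mult_right_mono)
    then show "\<forall>\<^sub>F n in sequentially.
        norm (padic_abs p (B n * Z n - B n * W n)) \<le> K * padic_abs p (Z n - W n)"
      by simp
    show "(\<lambda>n. K * padic_abs p (Z n - W n)) \<longlonglongrightarrow> 0"
      using assms(2) unfolding pequiv_def by (intro tendsto_mult_right_zero)
  qed
qed

lemma pequiv_mult_right:
  assumes "pcauchy p B" "pequiv p Z W"
  shows "pequiv p (\<lambda>n. Z n * B n) (\<lambda>n. W n * B n)"
  using pequiv_mult_left[OF assms] by (simp add: mult.commute)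

lemma padic_abs_lim_pequiv:
  assumes "pcauchy p X" "pcauchy p Y" "pequiv p X Y"
  shows "padic_abs_lim p X = padic_abs_lim p Y"
proof -
  have "(\<lambda>n. padic_abs p (X n) - padic_abs p (Y n)) \<longlonglongrightarrow> padic_abs_lim p X - padic_abs_lim p Y"
    using pcauchy_abs_LIMSEQ[OF assms(1)] pcauchy_abs_LIMSEQ[OF assms(2)] by (intro tendsto_diff)
  moreover have "(\<lambda>n. padic_abs p (X n) - padic_abs p (Y n)) \<longlonglongrightarrow> 0"
  proof (rule Lim_null_comparison)
    show "\<forall>\<^sub>F n in sequentially. norm (padic_abs p (X n) - padic_abs p (Y n)) \<le> padic_abs p (X n - Y n)"
      using abs_padic_abs_diff_le by simp
    show "(\<lambda>n. padic_abs p (X n - Y n)) \<longlonglongrightarrow> 0" using assms(3) unfolding pequiv_def .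
  qed
  ultimately show ?thesis using LIMSEQ_unique by fastforce
qed

lemma padic_abs_lim_nonneg: "pcauchy p X \<Longrightarrow> padic_abs_lim p X \<ge> 0"
  using LIMSEQ_le_const[OF pcauchy_abs_LIMSEQ, of X 0] by auto

lemma padic_abs_lim_cmult:
  assumes "pcauchy p X"
  shows "padic_abs_lim p (\<lambda>n. c * X n) = padic_abs p c * padic_abs_lim p X"
proof -
  have "(\<lambda>n. padic_abs p c * padic_abs p (X n)) \<longlonglongrightarrow> padic_abs p c * padic_abs_lim p X"
    using pcauchy_abs_LIMSEQ[OF assms] by (intro tendsto_mult_left)
  then show ?thesis
    unfolding padic_abs_lim_def[of p "\<lambda>n. c * X n"] by (simp add: padic_abs_mult limI)
qed

lemma padic_abs_lim_const: "padic_abs_lim p (\<lambda>n. c) = padic_abs p c"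
  unfolding padic_abs_lim_def by (simp add: limI)

lemma padic_abs_lim_diff_le_max:
  assumes "pcauchy p X" "pcauchy p Y"
  shows "padic_abs_lim p (\<lambda>n. X n - Y n) \<le> max (padic_abs_lim p X) (padic_abs_lim p Y)"
proof (rule LIMSEQ_le)
  show "(\<lambda>n. padic_abs p (X n - Y n)) \<longlonglongrightarrow> padic_abs_lim p (\<lambda>n. X n - Y n)"
    using pcauchy_abs_LIMSEQ[OF pcauchy_diff[OF assms]] by simp
  show "(\<lambda>n. max (padic_abs p (X n)) (padic_abs p (Y n))) \<longlonglongrightarrow> max (padic_abs_lim p X) (padic_abs_lim p Y)"
    using pcauchy_abs_LIMSEQ[OF assms(1)] pcauchy_abs_LIMSEQ[OF assms(2)] by (intro tendsto_max)
  show "\<exists>N. \<forall>n\<ge>N. padic_abs p (X n - Y n) \<le> max (padic_abs p (X n)) (padic_abs p (Y n))"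
    using padic_abs_diff_le_max by blast
qed

lemma padic_abs_lim_add_le_max:
  assumes "pcauchy p X" "pcauchy p Y"
  shows "padic_abs_lim p (\<lambda>n. X n + Y n) \<le> max (padic_abs_lim p X) (padic_abs_lim p Y)"
  using padic_abs_lim_diff_le_max[OF assms(1) pcauchy_cmult[OF assms(2), of "-1"]]
    padic_abs_lim_cmult[OF assms(2), of "-1"] by simp

lemma padic_abs_lim_eq_0_iff:
  assumes "pcauchy p X"
  shows "padic_abs_lim p X = 0 \<longleftrightarrow> pequiv p X (\<lambda>n. 0)"
  using pcauchy_abs_LIMSEQ[OF assms] LIMSEQ_unique unfolding pequiv_def by auto

lemma padic_abs_lim_less_1_imp_le:
  assumes "pcauchy p X" "padic_abs_lim p X < 1"
  shows "padic_abs_lim p X \<le> 1 / real p"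
proof -
  have "eventually (\<lambda>n. padic_abs p (X n) < 1) sequentially"
    using order_tendstoD(2)[OF pcauchy_abs_LIMSEQ[OF assms(1)] assms(2)] .
  then have "eventually (\<lambda>n. padic_abs p (X n) \<le> 1 / real p) sequentially"
    by eventually_elim (rule padic_abs_less_1_imp_le)
  then show ?thesis using tendsto_upperbound[OF pcauchy_abs_LIMSEQ[OF assms(1)]] by simp
qed

lemma padic_abs_lim_approx_const:
  assumes "pcauchy p X" "e > 0"
  obtains r where "padic_abs_lim p (\<lambda>n. X n - r) < e"
proof -
  obtain N where N: "\<forall>m\<ge>N. \<forall>n\<ge>N. padic_abs p (X m - X n) < e / 2"
    using assms unfolding pcauchy_def by (meson half_gt_zero)
  have "\<forall>n\<ge>N. padic_abs p (X n - X N) \<le> e / 2" using N by (simp add: less_imp_le)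
  then have "padic_abs_lim p (\<lambda>n. X n - X N) \<le> e / 2"
    using LIMSEQ_le_const2[OF pcauchy_abs_LIMSEQ[OF pcauchy_diff[OF assms(1) pcauchy_const]]] by blast
  then show ?thesis using that[of "X N"] assms(2) by simp
qed

lemma pcauchy_abs_eventually_gt:
  assumes "pcauchy p X" "padic_abs_lim p X \<noteq> 0"
  obtains N where "padic_abs_lim p X > 0" "\<And>n. n \<ge> N \<Longrightarrow> padic_abs_lim p X / 2 < padic_abs p (X n)"
proof -
  have L: "padic_abs_lim p X > 0" using padic_abs_lim_nonneg[OF assms(1)] assms(2) by simp
  then have "eventually (\<lambda>n. padic_abs_lim p X / 2 < padic_abs p (X n)) sequentially"
    using order_tendstoD(1)[OF pcauchy_abs_LIMSEQ[OF assms(1)], of "padic_abs_lim p X / 2"] by simp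
  then show ?thesis using that L unfolding eventually_sequentially by blast
qed

lemma pcauchy_inverse:
  assumes "pcauchy p X" "padic_abs_lim p X \<noteq> 0"
  shows "pcauchy p (\<lambda>n. inverse (X n))"
  unfolding pcauchy_def
proof (intro allI impI)
  fix e :: real assume e: "e > 0"
  define L where "L = padic_abs_lim p X"
  obtain N0 where L: "L > 0" and N0: "\<And>n. n \<ge> N0 \<Longrightarrow> L / 2 < padic_abs p (X n)"
    using pcauchy_abs_eventually_gt[OF assms] unfolding L_def by blast
  have "e * (L/2) * (L/2) > 0" using e L by simp
  then obtain N1 where N1: "\<forall>m\<ge>N1. \<forall>n\<ge>N1. padic_abs p (X m - X n) < e * (L/2) * (L/2)"
    using assms(1) unfolding pcauchy_def by blast
  have "padic_abs p (inverse (X m) - inverse (X n)) < e" if mn: "max N0 N1 \<le> m" "max N0 N1 \<le> n"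
    for m n
  proof -
    have pos: "L / 2 < padic_abs p (X m)" "L / 2 < padic_abs p (X n)" using N0 mn by auto
    then have "X m \<noteq> 0" "X n \<noteq> 0" using L by auto
    then have "inverse (X m) - inverse (X n) = (X n - X m) / (X m * X n)" by (simp add: field_simps)
    then have eq: "padic_abs p (inverse (X m) - inverse (X n))
        = padic_abs p (X m - X n) / (padic_abs p (X m) * padic_abs p (X n))"
      by (simp add: padic_abs_divide padic_abs_mult padic_abs_minus_commute[of "X n"])
    have "e * ((L/2) * (L/2)) < e * (padic_abs p (X m) * padic_abs p (X n))"
      using pos L e by (intro mult_strict_left_mono mult_strict_mono) auto
    moreover have "padic_abs p (X m - X n) < e * (L/2) * (L/2)" using N1 mn by simp
    ultimately have "padic_abs p (X m - X n) < e * (padic_abs p (X m) * padic_abs p (X n))"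
      by (simp add: mult.assoc)
    moreover have "padic_abs p (X m) * padic_abs p (X n) > 0" using pos L by simp
    ultimately show ?thesis unfolding eq by (simp add: divide_less_eq)
  qed
  then show "\<exists>N. \<forall>m\<ge>N. \<forall>n\<ge>N. padic_abs p (inverse (X m) - inverse (X n)) < e" by blast
qed

lemma padic_abs_lim_inverse:
  assumes "pcauchy p X" "padic_abs_lim p X \<noteq> 0"
  shows "padic_abs_lim p (\<lambda>n. inverse (X n)) = inverse (padic_abs_lim p X)"
proof -
  have "(\<lambda>n. inverse (padic_abs p (X n))) \<longlonglongrightarrow> inverse (padic_abs_lim p X)"
    using pcauchy_abs_LIMSEQ[OF assms(1)] assms(2) by (intro tendsto_inverse)
  then show ?thesis
    unfolding padic_abs_lim_def[of p "\<lambda>n. inverse (X n)"] by (simp add: padic_abs_inverse limI)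
qed

lemma pequiv_mult_inverse:
  assumes "pcauchy p X" "padic_abs_lim p X \<noteq> 0"
  shows "pequiv p (\<lambda>n. X n * inverse (X n)) (\<lambda>n. 1)"
proof -
  obtain N where "padic_abs_lim p X > 0" "\<And>n. n \<ge> N \<Longrightarrow> padic_abs_lim p X / 2 < padic_abs p (X n)"
    using pcauchy_abs_eventually_gt[OF assms] by blast
  then have "\<forall>n\<ge>N. padic_abs p (X n * inverse (X n) - 1) = 0"
    by (metis half_gt_zero less_asym padic_abs_0 right_inverse diff_self)
  then show ?thesis
    unfolding pequiv_def by (intro tendsto_eventually) (auto simp: eventually_sequentially)
qed

lemma pclass_mem: "pcauchy p X \<Longrightarrow> X \<in> pclass p X"
  unfolding pclass_def using pequiv_refl by simp

lemma pclass_eq: "pequiv p X Y \<Longrightarrow> pclass p X = pclass p Y"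
  unfolding pclass_def using pequiv_sym pequiv_trans by blast

lemma pclass_eq_iff:
  assumes "pcauchy p Y"
  shows "pclass p X = pclass p Y \<longleftrightarrow> pequiv p X Y"
proof
  assume "pclass p X = pclass p Y"
  then have "Y \<in> pclass p X" using pclass_mem[OF assms] by simp
  then show "pequiv p X Y" unfolding pclass_def by simp
qed (rule pclass_eq)

lemma prep_pclass:
  assumes "pcauchy p X"
  shows "pcauchy p (prep (pclass p X))" "pequiv p X (prep (pclass p X))"
proof -
  have "prep (pclass p X) \<in> pclass p X"
    unfolding prep_def by (rule someI[of "\<lambda>Y. Y \<in> pclass p X", OF pclass_mem[OF assms]])
  then show "pcauchy p (prep (pclass p X))" "pequiv p X (prep (pclass p X))"
    unfolding pclass_def by auto
qed

lemma Qp_prep: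
  assumes "x \<in> Qp p"
  shows "pcauchy p (prep x)" "x = pclass p (prep x)"
proof -
  obtain X where X: "pcauchy p X" "x = pclass p X" using assms unfolding Qp_def by blast
  show "pcauchy p (prep x)" using prep_pclass(1)[OF X(1)] unfolding X(2) .
  show "x = pclass p (prep x)" unfolding X(2) by (rule pclass_eq[OF prep_pclass(2)[OF X(1)]])
qed

lemma pclass_in_Qp: "pcauchy p X \<Longrightarrow> pclass p X \<in> Qp p"
  unfolding Qp_def by blast

lemma pmul_pclass:
  assumes "pcauchy p X" "pcauchy p Y"
  shows "pmul p (pclass p X) (pclass p Y) = pclass p (\<lambda>n. X n * Y n)"
proof -
  let ?A = "prep (pclass p X)" and ?B = "prep (pclass p Y)"
  have "pequiv p (\<lambda>n. ?A n * ?B n) (\<lambda>n. X n * ?B n)"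
    using pequiv_mult_right[OF prep_pclass(1)[OF assms(2)]
        pequiv_sym[OF prep_pclass(2)[OF assms(1)]]] .
  moreover have "pequiv p (\<lambda>n. X n * ?B n) (\<lambda>n. X n * Y n)"
    using pequiv_mult_left[OF assms(1) pequiv_sym[OF prep_pclass(2)[OF assms(2)]]] .
  ultimately show ?thesis unfolding pmul_def using pclass_eq pequiv_trans by blast
qed

lemma pmul_pof_rat_pclass:
  "pcauchy p X \<Longrightarrow> pmul p (pof_rat p q) (pclass p X) = pclass p (\<lambda>n. q * X n)"
  unfolding pof_rat_def using pmul_pclass pcauchy_const by blast

lemma pdist_pclass:
  assumes "pcauchy p X" "pcauchy p Y"
  shows "pdist p (pclass p X) (pclass p Y) = padic_abs_lim p (\<lambda>n. X n - Y n)"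
proof -
  let ?A = "prep (pclass p X)" and ?B = "prep (pclass p Y)"
  have "pdist p (pclass p X) (pclass p Y) = padic_abs_lim p (\<lambda>n. ?A n - ?B n)"
    unfolding pdist_def padic_abs_lim_def ..
  also have "\<dots> = padic_abs_lim p (\<lambda>n. X n - Y n)"
    using prep_pclass[OF assms(1)] prep_pclass[OF assms(2)] assms
    by (intro padic_abs_lim_pequiv pequiv_diff)
      (auto intro: pequiv_sym pcauchy_diff)
  finally show ?thesis .
qed

lemma pdist_prep:
  "x \<in> Qp p \<Longrightarrow> y \<in> Qp p \<Longrightarrow> pdist p x y = padic_abs_lim p (\<lambda>n. prep x n - prep y n)"
  using pdist_pclass[OF Qp_prep(1) Qp_prep(1)] Qp_prep(2) by metis

lemma padic_norm_pclass: "pcauchy p X \<Longrightarrow> padic_norm p (pclass p X) = padic_abs_lim p X"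
  using pdist_pclass[OF _ pcauchy_const] unfolding pof_rat_def by simp

lemma padic_norm_prep: "x \<in> Qp p \<Longrightarrow> padic_norm p x = padic_abs_lim p (prep x)"
  using padic_norm_pclass[OF Qp_prep(1)] Qp_prep(2) by metis

lemma padic_norm_nonneg: "x \<in> Qp p \<Longrightarrow> padic_norm p x \<ge> 0"
  using padic_norm_prep padic_abs_lim_nonneg[OF Qp_prep(1)] by simp

lemma padic_norm_eq_0_iff: "x \<in> Qp p \<Longrightarrow> padic_norm p x = 0 \<longleftrightarrow> x = pof_rat p 0"
  using padic_norm_prep[of x] padic_abs_lim_eq_0_iff[OF Qp_prep(1)]
    pclass_eq_iff[OF pcauchy_const, of "prep x" 0] Qp_prep(2)[of x]
  unfolding pof_rat_def by metis

lemma padic_norm_less_1_imp_le: "x \<in> Qp p \<Longrightarrow> padic_norm p x < 1 \<Longrightarrow> padic_norm p x \<le> 1 / real p"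
  using padic_abs_lim_less_1_imp_le[OF Qp_prep(1)] padic_norm_prep by simp

lemma pof_rat_0_in_Zp: "pof_rat p 0 \<in> Zp p"
  using pclass_in_Qp[OF pcauchy_const] padic_norm_pclass[OF pcauchy_const]
    padic_abs_lim_const[of 0] unfolding pof_rat_def Zp_iff by simp

lemma padic_open_Qp: "padic_open p (Qp p)"
  unfolding padic_open_def by (auto intro: exI[of _ 1])

lemma pdist_commute: "x \<in> Qp p \<Longrightarrow> y \<in> Qp p \<Longrightarrow> pdist p x y = pdist p y x"
proof -
  assume xy: "x \<in> Qp p" "y \<in> Qp p"
  have "(\<lambda>n. prep y n - prep x n) = (\<lambda>n. (-1) * (prep x n - prep y n))" by simp
  then show ?thesis
    using pdist_prep[OF xy] pdist_prep[OF xy(2,1)]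
      padic_abs_lim_cmult[OF pcauchy_diff[OF Qp_prep(1)[OF xy(1)] Qp_prep(1)[OF xy(2)]], of "-1"]
    by simp
qed

lemma padic_norm_le_max_pdist:
  assumes "x \<in> Qp p" "y \<in> Qp p"
  shows "padic_norm p x \<le> max (padic_norm p y) (pdist p x y)"
proof -
  have cx: "pcauchy p (prep x)" and cy: "pcauchy p (prep y)" using Qp_prep assms by auto
  have "padic_abs_lim p (\<lambda>n. (prep x n - prep y n) + prep y n)
      \<le> max (padic_abs_lim p (\<lambda>n. prep x n - prep y n)) (padic_abs_lim p (prep y))"
    using padic_abs_lim_add_le_max[OF pcauchy_diff[OF cx cy] cy] .
  then show ?thesis using padic_norm_prep assms pdist_prep[OF assms] by (simp add: max.commute)
qed

lemma padic_open_Zp: "padic_open p (Zp p)"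
  unfolding padic_open_def
proof (intro conjI ballI)
  show "Zp p \<subseteq> Qp p" unfolding Zp_def by auto
  fix x assume "x \<in> Zp p"
  then have x: "x \<in> Qp p" "padic_norm p x \<le> 1" unfolding Zp_iff by auto
  have "y \<in> Zp p" if y: "y \<in> Qp p" "pdist p x y < 1" for y
    using padic_norm_le_max_pdist[OF y(1) x(1)] pdist_commute[OF x(1) y(1)] x y
    unfolding Zp_iff by simp
  then show "\<exists>e>0. \<forall>y\<in>Qp p. pdist p x y < e \<longrightarrow> y \<in> Zp p" by (intro exI[of _ 1]) auto
qed

lemma padic_open_nonzero: "padic_open p {y \<in> Qp p. y \<noteq> pof_rat p 0}"
  unfolding padic_open_def
proof (intro conjI ballI)
  fix x assume "x \<in> {y \<in> Qp p. y \<noteq> pof_rat p 0}"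
  then have x: "x \<in> Qp p" "padic_norm p x > 0"
    using padic_norm_nonneg padic_norm_eq_0_iff by (auto simp: order_less_le)
  have "y \<noteq> pof_rat p 0" if y: "y \<in> Qp p" "pdist p x y < padic_norm p x" for y
    using padic_norm_le_max_pdist[OF x(1) y(1)] padic_norm_eq_0_iff[OF y(1)] x y by auto
  then show "\<exists>e>0. \<forall>y\<in>Qp p. pdist p x y < e \<longrightarrow> y \<in> {y \<in> Qp p. y \<noteq> pof_rat p 0}"
    using x by (intro exI[of _ "padic_norm p x"]) auto
qed auto

lemma padic_open_Int: "padic_open p U \<Longrightarrow> padic_open p U' \<Longrightarrow> padic_open p (U \<inter> U')"
  unfolding padic_open_def
proof (intro conjI ballI)
  assume U: "U \<subseteq> Qp p \<and> (\<forall>x\<in>U. \<exists>e>0. \<forall>y\<in>Qp p. pdist p x y < e \<longrightarrow> y \<in> U)"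
    and U': "U' \<subseteq> Qp p \<and> (\<forall>x\<in>U'. \<exists>e>0. \<forall>y\<in>Qp p. pdist p x y < e \<longrightarrow> y \<in> U')"
  then show "U \<inter> U' \<subseteq> Qp p" by auto
  fix x assume "x \<in> U \<inter> U'"
  then obtain e e' where "e > 0" "\<forall>y\<in>Qp p. pdist p x y < e \<longrightarrow> y \<in> U"
    "e' > 0" "\<forall>y\<in>Qp p. pdist p x y < e' \<longrightarrow> y \<in> U'" using U U' by blast
  then show "\<exists>e>0. \<forall>y\<in>Qp p. pdist p x y < e \<longrightarrow> y \<in> U \<inter> U'"
    by (intro exI[of _ "min e e'"]) auto
qed

lemma pmul_pof_rat_prep: "x \<in> Qp p \<Longrightarrow> pmul p (pof_rat p q) x = pclass p (\<lambda>n. q * prep x n)"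
  using pmul_pof_rat_pclass[OF Qp_prep(1)] Qp_prep(2) by metis

lemma pmul_pof_rat_in_Qp: "x \<in> Qp p \<Longrightarrow> pmul p (pof_rat p q) x \<in> Qp p"
  by (simp add: pmul_pof_rat_prep pclass_in_Qp pcauchy_cmult Qp_prep(1))

lemma padic_norm_pmul_pof_rat:
  "x \<in> Qp p \<Longrightarrow> padic_norm p (pmul p (pof_rat p q) x) = padic_abs p q * padic_norm p x"
  by (simp add: pmul_pof_rat_prep padic_norm_pclass pcauchy_cmult Qp_prep(1)
      padic_abs_lim_cmult padic_norm_prep)

lemma pmul_pof_rat_0: "pmul p (pof_rat p q) (pof_rat p 0) = pof_rat p 0"
  using pmul_pof_rat_pclass[OF pcauchy_const, of q 0] unfolding pof_rat_def by simp

lemma padic_abs_lim_approx_const_same_abs: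
  assumes "pcauchy p X" "padic_abs_lim p X > 0" "\<delta> > 0"
  obtains \<alpha> where "padic_abs_lim p (\<lambda>n. X n - \<alpha>) < \<delta>" "padic_abs p \<alpha> = padic_abs_lim p X"
proof -
  have "min \<delta> (padic_abs_lim p X) > 0" using assms(2,3) by simp
  then obtain \<alpha> where \<alpha>: "padic_abs_lim p (\<lambda>n. X n - \<alpha>) < min \<delta> (padic_abs_lim p X)"
    by (rule padic_abs_lim_approx_const[OF assms(1)])
  have "padic_abs_lim p (\<lambda>n. (X n - \<alpha>) + \<alpha>) \<le> max (padic_abs_lim p (\<lambda>n. X n - \<alpha>)) (padic_abs_lim p (\<lambda>n. \<alpha>))"
    using padic_abs_lim_add_le_max[OF pcauchy_diff[OF assms(1) pcauchy_const] pcauchy_const] .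
  moreover have "padic_abs_lim p (\<lambda>n. X n - (X n - \<alpha>)) \<le> max (padic_abs_lim p X) (padic_abs_lim p (\<lambda>n. X n - \<alpha>))"
    using padic_abs_lim_diff_le_max[OF assms(1) pcauchy_diff[OF assms(1) pcauchy_const]] .
  ultimately have "padic_abs p \<alpha> = padic_abs_lim p X"
    using \<alpha> by (simp add: padic_abs_lim_const max_def split: if_splits)
  then show ?thesis using that \<alpha> by auto
qed

lemma padic_abs_lim_diff_add_less:
  assumes "pcauchy p A" "pcauchy p B" "pcauchy p C"
    and "padic_abs_lim p A < e" "padic_abs_lim p B < e" "padic_abs_lim p C < e"
  shows "padic_abs_lim p (\<lambda>n. A n - (B n + C n)) < e"
  using padic_abs_lim_diff_le_max[OF assms(1) pcauchy_add[OF assms(2,3)]]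
    padic_abs_lim_add_le_max[OF assms(2,3)] assms(4-6) by simp

text \<open>With \<open>\<beta> \<approx> y\<close> and \<open>\<alpha> \<approx> x\<close> rational, \<open>c = \<beta> / \<alpha>\<close> works, because
  \<open>y - q x = (y - \<beta>) - ((q - c) x + c (x - \<alpha>))\<close>.\<close>
lemma rat_multiple_approx:
  assumes xq: "x \<in> Qp p" and yq: "y \<in> Qp p" and x0: "x \<noteq> pof_rat p 0" and e: "e > 0"
  obtains c \<eta> where "\<eta> > 0" "\<And>q. padic_abs p (q - c) < \<eta> \<Longrightarrow> pdist p y (pmul p (pof_rat p q) x) < e"
proof -
  let ?X = "prep x" and ?Y = "prep y"
  have cx: "pcauchy p ?X" and cy: "pcauchy p ?Y" using Qp_prep xq yq by auto
  define L where "L = padic_abs_lim p ?X"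
  have L: "L > 0" unfolding L_def using padic_norm_prep[OF xq] padic_norm_eq_0_iff[OF xq] x0
      padic_norm_nonneg[OF xq] by (metis order_less_le)
  obtain \<beta> where \<beta>: "padic_abs_lim p (\<lambda>n. ?Y n - \<beta>) < e"
    using padic_abs_lim_approx_const[OF cy e] by blast
  define \<delta> where "\<delta> = e * L / (padic_abs p \<beta> + 1)"
  have "padic_abs p \<beta> + 1 > 0" by (simp add: add_nonneg_pos)
  then have \<delta>: "\<delta> > 0" unfolding \<delta>_def using L e by simp
  obtain \<alpha> where \<alpha>: "padic_abs_lim p (\<lambda>n. ?X n - \<alpha>) < \<delta>" "padic_abs p \<alpha> = L"
    using padic_abs_lim_approx_const_same_abs[OF cx _ \<delta>] L unfolding L_def by blast
  then have \<alpha>0: "\<alpha> \<noteq> 0" using L by auto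
  define c where "c = \<beta> / \<alpha>"
  have c: "padic_abs p c * L = padic_abs p \<beta>"
    unfolding c_def using \<alpha>(2) L by (simp add: padic_abs_divide)
  have "pdist p y (pmul p (pof_rat p q) x) < e" if q: "padic_abs p (q - c) < e / L" for q
  proof -
    have "pdist p y (pmul p (pof_rat p q) x) = padic_abs_lim p (\<lambda>n. ?Y n - q * ?X n)"
      using pmul_pof_rat_prep[OF xq] Qp_prep(2)[OF yq] pdist_pclass cx cy by (metis pcauchy_cmult)
    also have "(\<lambda>n. ?Y n - q * ?X n) = (\<lambda>n. (?Y n - \<beta>) - ((q - c) * ?X n + c * (?X n - \<alpha>)))"
      using \<alpha>0 by (auto simp: c_def algebra_simps)
    finally have eq: "pdist p y (pmul p (pof_rat p q) x)
        = padic_abs_lim p (\<lambda>n. (?Y n - \<beta>) - ((q - c) * ?X n + c * (?X n - \<alpha>)))" .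
    have "padic_abs_lim p (\<lambda>n. (q - c) * ?X n) = padic_abs p (q - c) * L"
      unfolding L_def using padic_abs_lim_cmult[OF cx] .
    also have "\<dots> < e" using q L by (simp add: field_simps)
    finally have 1: "padic_abs_lim p (\<lambda>n. (q - c) * ?X n) < e" .
    have "padic_abs_lim p (\<lambda>n. c * (?X n - \<alpha>)) = padic_abs p c * padic_abs_lim p (\<lambda>n. ?X n - \<alpha>)"
      using padic_abs_lim_cmult[OF pcauchy_diff[OF cx pcauchy_const]] .
    also have "\<dots> \<le> padic_abs p c * (e * L / (padic_abs p \<beta> + 1))"
      using \<alpha>(1) unfolding \<delta>_def by (intro mult_left_mono) auto
    also have "\<dots> = e * (padic_abs p \<beta> / (padic_abs p \<beta> + 1))"
      using c by (simp add: field_simps)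
    also have "\<dots> < e * 1"
      using e \<open>padic_abs p \<beta> + 1 > 0\<close> by (intro mult_strict_left_mono) (simp_all add: divide_less_eq)
    finally have 2: "padic_abs_lim p (\<lambda>n. c * (?X n - \<alpha>)) < e" by simp
    have c1: "pcauchy p (\<lambda>n. ?Y n - \<beta>)" and c2: "pcauchy p (\<lambda>n. (q - c) * ?X n)"
      and c3: "pcauchy p (\<lambda>n. c * (?X n - \<alpha>))"
      using cx cy by (simp_all add: pcauchy_diff pcauchy_cmult pcauchy_const)
    show ?thesis unfolding eq by (rule padic_abs_lim_diff_add_less[OF c1 c2 c3 \<beta> 1 2])
  qed
  then show ?thesis using that[of "e / L" c] e L by simp
qed

lemma Qp_inverse:
  assumes xq: "x \<in> Qp p" and x0: "x \<noteq> pof_rat p 0"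
  shows "\<exists>y. y \<in> Qp p \<and> pmul p x y = pof_rat p 1 \<and> padic_norm p y = inverse (padic_norm p x)"
proof -
  let ?X = "prep x"
  have cx: "pcauchy p ?X" using Qp_prep[OF xq] by auto
  have "padic_abs_lim p ?X \<noteq> 0" using padic_norm_prep[OF xq] padic_norm_eq_0_iff[OF xq] x0 by simp
  note inv = pcauchy_inverse[OF cx this] padic_abs_lim_inverse[OF cx this] pequiv_mult_inverse[OF cx this]
  have "pmul p x (pclass p (\<lambda>n. inverse (?X n))) = pclass p (\<lambda>n. ?X n * inverse (?X n))"
    using pmul_pclass[OF cx inv(1)] Qp_prep(2)[OF xq] by metis
  also have "\<dots> = pof_rat p 1" unfolding pof_rat_def using pclass_eq[OF inv(3)] .
  moreover have "padic_norm p (pclass p (\<lambda>n. inverse (?X n))) = inverse (padic_norm p x)"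
    using padic_norm_pclass[OF inv(1)] inv(2) padic_norm_prep[OF xq] by simp
  ultimately show ?thesis using pclass_in_Qp[OF inv(1)] by blast
qed

lemma rat_mult_in_padic_open:
  assumes U: "padic_open p U" "y \<in> U" and x: "x \<in> Qp p" "x \<noteq> pof_rat p 0"
  obtains c \<eta> where "\<eta> > 0" "\<And>q. padic_abs p (q - c) < \<eta> \<Longrightarrow> pmul p (pof_rat p q) x \<in> U"
proof -
  obtain e where e: "e > 0" "\<And>z. z \<in> Qp p \<Longrightarrow> pdist p y z < e \<Longrightarrow> z \<in> U"
    using U unfolding padic_open_def by blast
  have "y \<in> Qp p" using U unfolding padic_open_def by blast
  then obtain c \<eta> where "\<eta> > 0" "\<And>q. padic_abs p (q - c) < \<eta> \<Longrightarrow> pdist p y (pmul p (pof_rat p q) x) < e"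
    using rat_multiple_approx[OF x(1) _ x(2) e(1)] by blast
  then show ?thesis using that e(2) pmul_pof_rat_in_Qp[OF x(1)] by blast
qed

end

section \<open>Simultaneous approximation by rationals\<close>

lemma nonzero_int_cong_near:
  fixes M m0 :: int and t :: real
  assumes "M > 0"
  obtains m where "M dvd m - m0" "m \<noteq> 0" "\<bar>real_of_int m - t\<bar> \<le> M"
proof -
  define m1 where "m1 = m0 + M * \<lfloor>(t - m0) / M\<rfloor>"
  have "of_int \<lfloor>(t - m0) / M\<rfloor> * M \<le> t - m0" "t - m0 < (of_int \<lfloor>(t - m0) / M\<rfloor> + 1) * M"
    using assms by (simp_all add: floor_divide_lower floor_divide_upper)
  then have bounds: "real_of_int m1 \<le> t" "t < real_of_int (m1 + M)"
    unfolding m1_def by (simp_all add: algebra_simps)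
  have "M dvd m1 - m0" "M dvd (m1 + M) - m0" unfolding m1_def by simp_all
  moreover have "\<bar>real_of_int m1 - t\<bar> \<le> M" "\<bar>real_of_int (m1 + M) - t\<bar> \<le> M"
    using bounds by auto
  moreover have "m1 \<noteq> 0 \<or> m1 + M \<noteq> 0" using assms by auto
  ultimately show ?thesis using that by blast
qed

lemma prime_dvd_prod_prime_powers_imp_mem:
  fixes G :: "nat set"
  assumes "finite G" "\<forall>q\<in>G. prime q" "prime p" "p dvd (\<Prod>q\<in>G. q ^ k q)"
  shows "p \<in> G"
proof -
  obtain q where q: "q \<in> G" "p dvd q ^ k q"
    using assms(4) by (auto simp: prime_dvd_prod_iff[OF assms(1,3)])
  have "p dvd q" using prime_dvd_power[OF assms(3) q(2)] .
  moreover have "prime q" using assms(2) q(1) by simp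
  ultimately have "p = q" using primes_dvd_imp_eq[OF assms(3)] by simp
  then show ?thesis using q(1) by simp
qed

lemma int_cong_prime_powers:
  fixes G :: "nat set" and n :: "nat \<Rightarrow> int"
  assumes "finite G" "\<forall>p\<in>G. prime p"
  obtains x :: int where "\<forall>p\<in>G. int p ^ K p dvd x - n p"
proof -
  have "\<forall>i\<in>G. \<forall>j\<in>G. i \<noteq> j \<longrightarrow> coprime (i ^ K i) (j ^ K j)"
    using assms(2) by (simp add: primes_coprime)
  then obtain x where x: "\<forall>p\<in>G. [x = nat (n p mod int (p ^ K p))] (mod p ^ K p)"
    using chinese_remainder_nat[OF assms(1), of "\<lambda>p. p ^ K p" "\<lambda>p. nat (n p mod int (p ^ K p))"]
    by blast
  have "int p ^ K p dvd int x - n p" if "p \<in> G" for p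
  proof -
    have "int (p ^ K p) > 0" using assms(2) that prime_gt_0_nat by simp
    then have "int (nat (n p mod int (p ^ K p))) = n p mod int (p ^ K p)" by simp
    moreover have "[int x = int (nat (n p mod int (p ^ K p)))] (mod int (p ^ K p))"
      unfolding cong_int_iff using x that by blast
    ultimately have "[int x = n p] (mod int (p ^ K p))" by (simp add: cong_def)
    then show ?thesis by (simp add: cong_iff_dvd_diff)
  qed
  then show ?thesis using that by blast
qed

lemma int_approx_padic_simultaneous:
  fixes G :: "nat set" and r :: "nat \<Rightarrow> rat"
  assumes "finite G" "\<forall>p\<in>G. prime p" "\<forall>p\<in>G. padic_abs p (r p) \<le> 1"
  obtains x :: int where
    "\<And>p m. p \<in> G \<Longrightarrow> int p ^ K p dvd m - x \<Longrightarrow> padic_abs p (of_int m - r p) \<le> real p powr - real (K p)"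
proof -
  have "\<forall>p\<in>G. \<exists>n::int. padic_abs p (r p - of_int n) \<le> real p powr - real (K p)"
    using assms(2,3) padic_abs_approx_by_int by blast
  then obtain n where n: "\<forall>p\<in>G. padic_abs p (r p - of_int (n p)) \<le> real p powr - real (K p)"
    by metis
  obtain x where x: "\<forall>p\<in>G. int p ^ K p dvd x - n p" using int_cong_prime_powers[OF assms(1,2)] by blast
  have "padic_abs p (of_int m - r p) \<le> real p powr - real (K p)"
    if p: "p \<in> G" and m: "int p ^ K p dvd m - x" for p m
  proof -
    have "int p ^ K p dvd (m - x) + (x - n p)" using m x p by (intro dvd_add) auto
    then have "int p ^ K p dvd m - n p" by simp
    then have "padic_abs p (of_int (m - n p)) \<le> real p powr - real (K p)"
      using padic_abs_of_int_le_if_dvd assms(2) p by blast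
    moreover have "of_int m - r p = of_int (m - n p) - (r p - of_int (n p))" by simp
    moreover have "padic_abs p (r p - of_int (n p)) \<le> real p powr - real (K p)" using n p by blast
    ultimately show ?thesis
      using padic_abs_diff_le_max[of p "of_int (m - n p)" "r p - of_int (n p)"] p assms(2)
      by (simp add: of_int_diff)
  qed
  then show ?thesis using that by blast
qed

lemma exists_padic_clearing_denominator:
  fixes G :: "nat set" and c :: "nat \<Rightarrow> rat"
  assumes fin: "finite G" and G: "\<forall>p\<in>G. prime p"
  obtains P :: nat where "P > 0" "\<forall>p\<in>G. padic_abs p (of_nat P * c p) \<le> 1"
    "\<forall>p. prime p \<longrightarrow> p \<notin> G \<longrightarrow> \<not> p dvd P"
proof -
  have "\<forall>p\<in>G. \<exists>k. padic_abs p (c p) < real p ^ k"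
    using G real_arch_pow[OF p_gt_1] by blast
  then obtain k where k: "\<forall>p\<in>G. padic_abs p (c p) < real p ^ k p" by metis
  define P where "P = (\<Prod>p\<in>G. p ^ k p)"
  have "padic_abs p (of_nat P * c p) \<le> 1" if p: "p \<in> G" for p
  proof -
    have "p ^ k p dvd P" unfolding P_def using fin p by (rule dvd_prodI)
    then have "padic_abs p (of_nat P) \<le> real p powr - real (k p)"
      using padic_abs_of_nat_le_if_dvd G p by blast
    then have "padic_abs p (of_nat P) * padic_abs p (c p) \<le> real p powr - real (k p) * real p ^ k p"
      using k G p by (intro mult_mono) (auto simp: less_imp_le)
    also have "\<dots> = 1"
      using G p prime_gt_0_nat[of p] by (simp add: powr_minus_divide powr_realpow)
    finally show ?thesis using G p by (simp add: padic_abs_mult)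
  qed
  moreover have "\<forall>p. prime p \<longrightarrow> p \<notin> G \<longrightarrow> \<not> p dvd P"
    using prime_dvd_prod_prime_powers_imp_mem[OF fin G] unfolding P_def by blast
  moreover have "P > 0" unfolding P_def using G by (simp add: prime_gt_0_nat prod_pos)
  ultimately show ?thesis using that by blast
qed

lemma exists_prime_power_exponents:
  fixes G :: "nat set" and \<epsilon> :: "nat \<Rightarrow> real"
  assumes G: "\<forall>p\<in>G. prime p" and \<epsilon>: "\<forall>p\<in>G. \<epsilon> p > 0"
  obtains K where "\<forall>p\<in>G. real p powr - real (K p) < \<epsilon> p"
proof -
  have "\<forall>p\<in>G. \<exists>K. 1 / \<epsilon> p < real p ^ K"
    using G real_arch_pow[OF p_gt_1] by blast
  then obtain K where K: "\<forall>p\<in>G. 1 / \<epsilon> p < real p ^ K p" by metis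
  have "real p powr - real (K p) < \<epsilon> p" if "p \<in> G" for p
    using K that \<epsilon> G prime_gt_0_nat[of p]
    by (simp add: powr_minus_divide powr_realpow divide_less_eq mult.commute)
  then show ?thesis using that by blast
qed

text \<open>\<open>P\<close> clears the \<open>p\<close>-adic denominators of the targets, and the \<open>p\<close>-adic conditions on
  \<open>m / (P D)\<close> only fix \<open>m\<close> modulo \<open>M = \<Prod>p\<^sup>K\<^sup>p\<close>, which does not depend on \<open>D\<close>.\<close>
lemma residue_class_padic_approx:
  fixes G :: "nat set" and c :: "nat \<Rightarrow> rat" and \<eta> :: "nat \<Rightarrow> real"
  assumes fin: "finite G" and G: "\<forall>p\<in>G. prime p" and \<eta>: "\<forall>p\<in>G. \<eta> p > 0"
  obtains P M :: nat where "P > 0" "M > 0" "\<forall>p. prime p \<longrightarrow> p \<notin> G \<longrightarrow> \<not> p dvd P"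
    "\<And>D. \<forall>p\<in>G. \<not> p dvd D \<Longrightarrow> \<exists>x::int. \<forall>m. int M dvd m - x \<longrightarrow>
       (\<forall>p\<in>G. padic_abs p (of_int m / (of_nat P * of_nat D) - c p) < \<eta> p)"
proof -
  obtain P where P: "P > 0" "\<forall>p\<in>G. padic_abs p (of_nat P * c p) \<le> 1"
    "\<forall>p. prime p \<longrightarrow> p \<notin> G \<longrightarrow> \<not> p dvd P"
    using exists_padic_clearing_denominator[OF fin G, where c = c] by blast
  have P_pos: "padic_abs p (of_nat P) > 0" if "p \<in> G" for p using padic_abs_pos G that P(1) by simp
  then have "\<forall>p\<in>G. \<eta> p * padic_abs p (of_nat P) > 0" using \<eta> by simp
  then obtain K where K: "\<forall>p\<in>G. real p powr - real (K p) < \<eta> p * padic_abs p (of_nat P)"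
    by (rule exists_prime_power_exponents[OF G])
  define M where "M = (\<Prod>p\<in>G. p ^ K p)"
  have approx: "\<exists>x::int. \<forall>m. int M dvd m - x \<longrightarrow>
      (\<forall>p\<in>G. padic_abs p (of_int m / (of_nat P * of_nat D) - c p) < \<eta> p)"
    if D: "\<forall>p\<in>G. \<not> p dvd D" for D
  proof -
    define r where "r p = of_nat P * of_nat D * c p" for p
    have D_unit: "padic_abs p (of_nat D) = 1" if "p \<in> G" for p
      using padic_abs_of_nat_eq_1 G D that by simp
    have "padic_abs p (r p) \<le> 1" if "p \<in> G" for p
      using P(2) D_unit[OF that] G that by (simp add: r_def padic_abs_mult mult.commute)
    then obtain x where x: "\<And>p m. p \<in> G \<Longrightarrow> int p ^ K p dvd m - x
        \<Longrightarrow> padic_abs p (of_int m - r p) \<le> real p powr - real (K p)"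
      using int_approx_padic_simultaneous[OF fin G] by blast
    have "padic_abs p (of_int m / (of_nat P * of_nat D) - c p) < \<eta> p"
      if m: "int M dvd m - x" and p: "p \<in> G" for m p
    proof -
      have "p ^ K p dvd M" unfolding M_def using fin p by (rule dvd_prodI)
      then have "int p ^ K p dvd int M" using int_dvd_int_iff[of "p ^ K p" M] by simp
      then have "padic_abs p (of_int m - r p) \<le> real p powr - real (K p)"
        using x[OF p dvd_trans[OF _ m]] by blast
      moreover have "D \<noteq> 0" using D p by (metis dvd_0_right)
      then have "of_int m / (of_nat P * of_nat D) - c p = (of_int m - r p) / (of_nat P * of_nat D)"
        unfolding r_def using P(1) by (simp add: field_simps)
      ultimately have "padic_abs p (of_int m / (of_nat P * of_nat D) - c p)
          \<le> real p powr - real (K p) / padic_abs p (of_nat P)"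
        using G p P_pos[OF p] D_unit[OF p] by (simp add: padic_abs_divide padic_abs_mult divide_right_mono)
      also have "\<dots> < \<eta> p" using K P_pos p by (simp add: divide_less_eq)
      finally show ?thesis .
    qed
    then show ?thesis by blast
  qed
  have "M > 0" unfolding M_def using G by (simp add: prime_gt_0_nat prod_pos)
  from that[OF P(1) this P(3) approx] show ?thesis .
qed

lemma rat_approx_at_finitely_many_primes:
  fixes G :: "nat set" and c :: "nat \<Rightarrow> rat" and \<eta> :: "nat \<Rightarrow> real"
  assumes fin: "finite G" and G: "\<forall>p\<in>G. prime p" and \<eta>: "\<forall>p\<in>G. \<eta> p > 0"
  obtains M :: real where
    "\<And>D t. D > 0 \<Longrightarrow> \<forall>p\<in>G. \<not> p dvd D \<Longrightarrow> \<exists>q. q \<noteq> 0 \<and> (\<forall>p\<in>G. padic_abs p (q - c p) < \<eta> p)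
       \<and> (\<forall>p. prime p \<longrightarrow> p \<notin> G \<longrightarrow> padic_abs p q * padic_abs p (of_nat D) \<le> 1)
       \<and> \<bar>real_of_rat q - t\<bar> \<le> M / real D"
proof -
  obtain P M where P0: "P > 0" and M: "M > 0" and P: "\<forall>p. prime p \<longrightarrow> p \<notin> G \<longrightarrow> \<not> p dvd P"
    and approx: "\<And>D. \<forall>p\<in>G. \<not> p dvd D \<Longrightarrow> \<exists>x::int. \<forall>m. int M dvd m - x \<longrightarrow>
       (\<forall>p\<in>G. padic_abs p (of_int m / (of_nat P * of_nat D) - c p) < \<eta> p)"
    by (rule residue_class_padic_approx[OF fin G \<eta>, where c = c]) blast
  have "\<exists>q. q \<noteq> 0 \<and> (\<forall>p\<in>G. padic_abs p (q - c p) < \<eta> p)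
       \<and> (\<forall>p. prime p \<longrightarrow> p \<notin> G \<longrightarrow> padic_abs p q * padic_abs p (of_nat D) \<le> 1)
       \<and> \<bar>real_of_rat q - t\<bar> \<le> real M / real D"
    if D0: "D > 0" and D: "\<forall>p\<in>G. \<not> p dvd D" for D t
  proof -
    define N where "N = real P * real D"
    have N: "N > 0" using P0 D0 unfolding N_def by simp
    obtain x where x: "\<forall>m. int M dvd m - x \<longrightarrow>
        (\<forall>p\<in>G. padic_abs p (of_int m / (of_nat P * of_nat D) - c p) < \<eta> p)"
      using approx[OF D] by blast
    obtain m where m: "int M dvd m - x" "m \<noteq> 0" "\<bar>real_of_int m - t * N\<bar> \<le> real M"
      using nonzero_int_cong_near[of "int M" x "t * N"] M by auto
    define q :: rat where "q = of_int m / (of_nat P * of_nat D)"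
    have "padic_abs p q * padic_abs p (of_nat D) \<le> 1" if "prime p" "p \<notin> G" for p
    proof -
      have "padic_abs p q * padic_abs p (of_nat D) = padic_abs p (of_int m)"
        unfolding q_def using P that D0 padic_abs_pos[of p "of_nat D"] padic_abs_of_nat_eq_1[of p P]
        by (simp add: padic_abs_divide padic_abs_mult)
      then show ?thesis using padic_abs_of_int_le_1 that by simp
    qed
    moreover have "\<bar>real_of_rat q - t\<bar> \<le> real M / real D"
    proof -
      have "real_of_rat q = real_of_int m / N"
        unfolding N_def q_def by (simp add: of_rat_divide of_rat_mult)
      then have "real_of_rat q - t = (real_of_int m - t * N) / N" using N by (simp add: field_simps)
      then have "\<bar>real_of_rat q - t\<bar> = \<bar>real_of_int m - t * N\<bar> / N" using N by simp
      also have "\<dots> \<le> real M / N" using m(3) N by (simp add: divide_right_mono)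
      also have "\<dots> \<le> real M / real D" unfolding N_def using P0 D0 by (intro divide_left_mono) auto
      finally show ?thesis .
    qed
    moreover have "q \<noteq> 0" unfolding q_def using m(2) P0 D0 by simp
    ultimately show ?thesis using x m(1) unfolding q_def by blast
  qed
  then show ?thesis using that by blast
qed

section \<open>The restricted product topology\<close>

definition adele_box :: "(nat \<Rightarrow> padic set) \<Rightarrow> real set \<Rightarrow> adele set" where
  "adele_box U V = {a \<in> adeles. (\<forall>p. prime p \<longrightarrow> fst a p \<in> U p) \<and> snd a \<in> V}"

definition restricted_open :: "(nat \<Rightarrow> padic set) \<Rightarrow> real set \<Rightarrow> bool" where
  "restricted_open U V \<longleftrightarrow>
     (\<forall>p. prime p \<longrightarrow> padic_open p (U p)) \<and> finite {p. prime p \<and> U p \<noteq> Zp p} \<and> open V"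

definition coarse_nbhd :: "adele \<Rightarrow> nat \<Rightarrow> padic set" where
  "coarse_nbhd a p = (if fst a p \<in> Zp p then Zp p else Qp p)"

lemma mem_adeles_iff:
  "a \<in> adeles \<longleftrightarrow> (\<forall>p. prime p \<longrightarrow> fst a p \<in> Qp p) \<and> (\<forall>p. \<not> prime p \<longrightarrow> fst a p = {})
     \<and> finite {p. prime p \<and> fst a p \<notin> Zp p}"
  by (cases a) (simp add: adeles_def)

lemma adele_basic_opens_iff:
  "W \<in> adele_basic_opens \<longleftrightarrow> (\<exists>U V. restricted_open U V \<and> W = adele_box U V)"
  unfolding adele_basic_opens_def restricted_open_def adele_box_def by blast

lemma openin_adele_box: "restricted_open U V \<Longrightarrow> openin adele_topology (adele_box U V)"
  unfolding adele_topology_def by (rule topology_generated_by_Basis) (auto simp: adele_basic_opens_iff)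

lemma restricted_open_Int:
  assumes "restricted_open U V" "restricted_open U' V'"
  shows "restricted_open (\<lambda>p. U p \<inter> U' p) (V \<inter> V')"
proof -
  have "{p. prime p \<and> U p \<inter> U' p \<noteq> Zp p} \<subseteq> {p. prime p \<and> U p \<noteq> Zp p} \<union> {p. prime p \<and> U' p \<noteq> Zp p}"
    by auto
  then show ?thesis
    using assms padic_open_Int finite_subset unfolding restricted_open_def by blast
qed

lemma restricted_open_update:
  assumes "restricted_open U V" "prime p" "padic_open p W" "open V'"
  shows "restricted_open (U(p := W)) V'"
proof -
  have "finite (insert p {r. prime r \<and> U r \<noteq> Zp r})"
    using assms(1) unfolding restricted_open_def by simp
  then have "finite {r. prime r \<and> (U(p := W)) r \<noteq> Zp r}"
    by (rule finite_subset[rotated]) auto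
  moreover have "padic_open r ((U(p := W)) r)" if "prime r" for r
    using assms(1,3) that unfolding restricted_open_def by simp
  ultimately show ?thesis using assms(4) unfolding restricted_open_def by blast
qed

lemma adele_boxD:
  assumes "a \<in> adele_box U V"
  shows "prime p \<Longrightarrow> fst a p \<in> U p" "snd a \<in> V"
  using assms unfolding adele_box_def by simp_all

lemma adele_box_Int: "adele_box U V \<inter> adele_box U' V' = adele_box (\<lambda>p. U p \<inter> U' p) (V \<inter> V')"
  unfolding adele_box_def by auto

lemma restricted_open_coarse_nbhd:
  assumes "a \<in> adeles"
  shows "restricted_open (coarse_nbhd a) UNIV" "a \<in> adele_box (coarse_nbhd a) UNIV"
proof -
  have "finite {p. prime p \<and> fst a p \<notin> Zp p}" using assms mem_adeles_iff by blast
  then have "finite {p. prime p \<and> coarse_nbhd a p \<noteq> Zp p}"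
    by (rule finite_subset[rotated]) (auto simp: coarse_nbhd_def)
  moreover have "padic_open p (coarse_nbhd a p)" if "prime p" for p
    using padic_open_Zp[OF that] padic_open_Qp[OF that] by (simp add: coarse_nbhd_def)
  ultimately show "restricted_open (coarse_nbhd a) UNIV" unfolding restricted_open_def by simp
  show "a \<in> adele_box (coarse_nbhd a) UNIV"
    using assms mem_adeles_iff unfolding adele_box_def coarse_nbhd_def by auto
qed

lemma topspace_adele_topology: "topspace adele_topology = adeles"
proof -
  have "\<Union> adele_basic_opens \<subseteq> adeles" unfolding adele_basic_opens_def by blast
  moreover have "adeles \<subseteq> \<Union> adele_basic_opens"
  proof
    fix a assume "a \<in> adeles"
    show "a \<in> \<Union> adele_basic_opens"
    proof
      show "adele_box (coarse_nbhd a) UNIV \<in> adele_basic_opens"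
        using restricted_open_coarse_nbhd(1)[OF \<open>a \<in> adeles\<close>] adele_basic_opens_iff by blast
    qed (rule restricted_open_coarse_nbhd(2)[OF \<open>a \<in> adeles\<close>])
  qed
  ultimately show ?thesis unfolding adele_topology_def by simp
qed

lemma openin_adele_topology_box:
  assumes "openin adele_topology W" "x \<in> W"
  obtains U V where "restricted_open U V" "x \<in> adele_box U V" "adele_box U V \<subseteq> W"
proof -
  have "generate_topology_on adele_basic_opens W"
    using assms(1) unfolding adele_topology_def by (rule openin_topology_generated_by)
  then have "\<exists>U V. restricted_open U V \<and> x \<in> adele_box U V \<and> adele_box U V \<subseteq> W"
    using assms(2)
  proof (induction arbitrary: x rule: generate_topology_on.induct)
    case (Int a b)
    then obtain U V U' V' where "restricted_open U V" "x \<in> adele_box U V" "adele_box U V \<subseteq> a"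
      "restricted_open U' V'" "x \<in> adele_box U' V'" "adele_box U' V' \<subseteq> b" by blast
    then have "restricted_open (\<lambda>p. U p \<inter> U' p) (V \<inter> V')"
      "x \<in> adele_box (\<lambda>p. U p \<inter> U' p) (V \<inter> V')"
      "adele_box (\<lambda>p. U p \<inter> U' p) (V \<inter> V') \<subseteq> a \<inter> b"
      using restricted_open_Int[of U V U' V'] adele_box_Int[of U V U' V'] by auto
    then show ?case by blast
  next
    case (UN K)
    then obtain k where "k \<in> K" "x \<in> k" by blast
    then obtain U V where "restricted_open U V" "x \<in> adele_box U V" "adele_box U V \<subseteq> k"
      using UN.IH by blast
    then show ?case using \<open>k \<in> K\<close> by blast
  next
    case (Basis s)
    then obtain U V where "restricted_open U V" "s = adele_box U V"
      using adele_basic_opens_iff by blast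
    then show ?case using Basis.prems by blast
  qed simp
  then show ?thesis using that by blast
qed

lemma fst_rat_mult: "prime p \<Longrightarrow> fst (adele_mul (adele_of_rat q) a) p = pmul p (pof_rat p q) (fst a p)"
  by (simp add: adele_mul_def adele_of_rat_def)

lemma snd_rat_mult: "snd (adele_mul (adele_of_rat q) a) = of_rat q * snd a"
  by (simp add: adele_mul_def adele_of_rat_def)

lemma rat_mult_in_Zp:
  assumes "prime p" "x \<in> Qp p" "padic_abs p q * padic_norm p x \<le> 1"
  shows "pmul p (pof_rat p q) x \<in> Zp p"
  using assms by (simp add: Zp_iff padic_norm_pmul_pof_rat pmul_pof_rat_in_Qp)

lemma rat_mult_in_adeles:
  assumes a: "a \<in> adeles"
  shows "adele_mul (adele_of_rat q) a \<in> adeles"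
proof -
  obtain d :: nat where d: "snd (quotient_of q) = int d" "d > 0"
    using pos_int_cases[OF quotient_of_denom_pos'[of q]] by blast
  have aQ: "fst a p \<in> Qp p" if "prime p" for p using a that by (simp add: mem_adeles_iff)
  have integral: "fst (adele_mul (adele_of_rat q) a) p \<in> Zp p"
    if p: "prime p" "fst a p \<in> Zp p" "\<not> p dvd d" for p
  proof -
    have "\<not> int p dvd snd (quotient_of q)" unfolding d(1) int_dvd_int_iff using p(3) .
    then have "padic_abs p q \<le> 1" using padic_abs_le_1_iff[OF p(1)] by blast
    moreover have "0 \<le> padic_norm p (fst a p)" "padic_norm p (fst a p) \<le> 1"
      using p(2) aQ[OF p(1)] by (simp_all add: Zp_iff padic_norm_nonneg[OF p(1)])
    ultimately have "padic_abs p q * padic_norm p (fst a p) \<le> 1" by (simp add: mult_le_one)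
    then show ?thesis using rat_mult_in_Zp[OF p(1) aQ[OF p(1)]] fst_rat_mult[OF p(1)] by simp
  qed
  have "{p. prime p \<and> fst (adele_mul (adele_of_rat q) a) p \<notin> Zp p}
      \<subseteq> {p. prime p \<and> fst a p \<notin> Zp p} \<union> {p. p dvd d}"
  proof
    fix p assume "p \<in> {p. prime p \<and> fst (adele_mul (adele_of_rat q) a) p \<notin> Zp p}"
    then have p: "prime p" "fst (adele_mul (adele_of_rat q) a) p \<notin> Zp p" by simp_all
    show "p \<in> {p. prime p \<and> fst a p \<notin> Zp p} \<union> {p. p dvd d}"
    proof (cases "p dvd d")
      case False
      then have "fst a p \<notin> Zp p" using integral[OF p(1)] p(2) by blast
      then show ?thesis using p(1) by simp
    qed simp
  qed
  moreover have "finite ({p. prime p \<and> fst a p \<notin> Zp p} \<union> {p. p dvd d})"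
    using a finite_divisors_nat[OF d(2)] by (simp add: mem_adeles_iff)
  ultimately have "finite {p. prime p \<and> fst (adele_mul (adele_of_rat q) a) p \<notin> Zp p}"
    by (rule finite_subset)
  moreover have "fst (adele_mul (adele_of_rat q) a) p \<in> Qp p" if "prime p" for p
    using aQ[OF that] fst_rat_mult[OF that] pmul_pof_rat_in_Qp[OF that] by simp
  moreover have "fst (adele_mul (adele_of_rat q) a) p = {}" if "\<not> prime p" for p
    using that by (simp add: adele_mul_def adele_of_rat_def)
  ultimately show ?thesis unfolding mem_adeles_iff by simp
qed

lemma adele_invertibleI:
  assumes a: "a \<in> adeles" and nonzero: "\<forall>p. prime p \<longrightarrow> fst a p \<noteq> pof_rat p 0" and "snd a \<noteq> 0"
    and fin: "finite {p. prime p \<and> padic_norm p (fst a p) < 1}"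
  shows "adele_invertible a"
proof -
  define y where "y p = (SOME y. y \<in> Qp p \<and> pmul p (fst a p) y = pof_rat p 1
      \<and> padic_norm p y = inverse (padic_norm p (fst a p)))" for p
  have "y p \<in> Qp p \<and> pmul p (fst a p) (y p) = pof_rat p 1
      \<and> padic_norm p (y p) = inverse (padic_norm p (fst a p))" if "prime p" for p
  proof -
    have "fst a p \<in> Qp p" using a that unfolding mem_adeles_iff by blast
    moreover have "fst a p \<noteq> pof_rat p 0" using nonzero that by simp
    ultimately show ?thesis unfolding y_def by (rule someI_ex[OF Qp_inverse[OF that]])
  qed
  then have y: "y p \<in> Qp p" "pmul p (fst a p) (y p) = pof_rat p 1"
    "padic_norm p (y p) = inverse (padic_norm p (fst a p))" if "prime p" for p
    using that by blast+
  define b :: adele where "b = ((\<lambda>p. if prime p then y p else {}), inverse (snd a))"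
  have b_p: "fst b p = y p" if "prime p" for p unfolding b_def fst_conv using that by (rule if_P)
  have "{p. prime p \<and> fst b p \<notin> Zp p} \<subseteq> {p. prime p \<and> padic_norm p (fst a p) < 1}"
  proof (intro subsetI, elim CollectE conjE)
    fix p assume p: "prime p" "fst b p \<notin> Zp p"
    then have "\<not> padic_norm p (y p) \<le> 1" using y(1)[OF p(1)] b_p[OF p(1)] by (simp add: Zp_iff)
    then have "1 < inverse (padic_norm p (fst a p))" using y(3)[OF p(1)] by simp
    then show "p \<in> {p. prime p \<and> padic_norm p (fst a p) < 1}"
      using p(1) by (simp add: one_less_inverse_iff)
  qed
  then have "finite {p. prime p \<and> fst b p \<notin> Zp p}" using fin by (rule finite_subset)
  moreover have "\<forall>p. prime p \<longrightarrow> fst b p \<in> Qp p" using y(1) b_p by simp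
  moreover have "\<forall>p. \<not> prime p \<longrightarrow> fst b p = {}" by (simp add: b_def)
  ultimately have "b \<in> adeles" unfolding mem_adeles_iff by simp
  moreover have "(\<lambda>p. if prime p then pmul p (fst a p) (fst b p) else {})
      = (\<lambda>p. if prime p then pof_rat p 1 else {})"
    using y(2) b_p by (intro ext) simp
  then have "adele_mul a b = adele_of_rat 1"
    using \<open>snd a \<noteq> 0\<close> unfolding adele_mul_def adele_of_rat_def by (simp add: b_def)
  ultimately show ?thesis unfolding adele_invertible_def by blast
qed

section \<open>Admissible denominators\<close>

text \<open>\<open>D\<close> is admissible for \<open>a\<close> off \<open>G\<close> when every rational \<open>q\<close> with
  \<open>|q|\<^sub>p |D|\<^sub>p \<le> 1\<close> keeps \<open>q a\<^sub>p\<close> integral at all primes outside \<open>G\<close>, while \<open>D\<close> is a \<open>p\<close>-adic unit at the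
  primes of \<open>G\<close> where \<open>a\<close> does not vanish.\<close>
definition admissible_denominator :: "adele \<Rightarrow> nat set \<Rightarrow> nat \<Rightarrow> bool" where
  "admissible_denominator a G D \<longleftrightarrow> D > 0 \<and> (\<forall>p. prime p \<longrightarrow> fst a p \<noteq> pof_rat p 0 \<longrightarrow>
     (if p \<in> G then \<not> p dvd D else padic_norm p (fst a p) \<le> padic_abs p (of_nat D)))"

lemma admissible_denominator_1:
  assumes "\<forall>p. prime p \<longrightarrow> p \<notin> G \<longrightarrow> fst a p \<in> Zp p"
  shows "admissible_denominator a G 1"
  using assms by (auto simp: admissible_denominator_def Zp_iff)

lemma admissible_denominator_prime_power:
  assumes "prime p0" "fst a p0 = pof_rat p0 0" "\<forall>p. prime p \<longrightarrow> p \<notin> G \<longrightarrow> fst a p \<in> Zp p"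
  shows "admissible_denominator a G (p0 ^ j)"
proof -
  have "\<not> p dvd p0 ^ j" if "prime p" "fst a p \<noteq> pof_rat p 0" for p
  proof
    assume "p dvd p0 ^ j"
    then have "p = p0" using prime_dvd_power[OF that(1)] primes_dvd_imp_eq[OF that(1) assms(1)] by simp
    then show False using that(2) assms(2) by simp
  qed
  moreover have "padic_norm p (fst a p) \<le> padic_abs p (of_nat (p0 ^ j))"
    if "prime p" "p \<notin> G" "fst a p \<noteq> pof_rat p 0" for p
  proof -
    have "padic_abs p (of_nat (p0 ^ j)) = 1"
      by (rule padic_abs_of_nat_eq_1[OF that(1) calculation[OF that(1,3)]])
    then show ?thesis using assms(3) that(1,2) by (simp add: Zp_iff)
  qed
  ultimately show ?thesis
    using prime_gt_0_nat[OF assms(1)] by (simp add: admissible_denominator_def)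
qed

lemma admissible_denominator_prod:
  assumes S: "finite S" "\<forall>p\<in>S. prime p" "S \<inter> G = {}"
    and small: "\<forall>p\<in>S. fst a p \<in> Qp p \<and> padic_norm p (fst a p) < 1"
    and integral: "\<forall>p. prime p \<longrightarrow> p \<notin> G \<longrightarrow> fst a p \<in> Zp p"
  shows "admissible_denominator a G (\<Prod>S)"
proof -
  have not_dvd: "\<not> p dvd \<Prod>T" if pT: "prime p" "p \<notin> T" "T \<subseteq> S" for p T
  proof
    assume "p dvd \<Prod>T"
    then obtain q where "q \<in> T" "p dvd q"
      using prime_dvd_prod_iff[OF finite_subset[OF pT(3) S(1)] pT(1), of id] by auto
    then have "p = q" using primes_dvd_imp_eq[OF pT(1)] S(2) pT(3) by auto
    then show False using pT(2) \<open>q \<in> T\<close> by simp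
  qed
  have "padic_norm p (fst a p) \<le> padic_abs p (of_nat (\<Prod>S))" if "prime p" "p \<notin> G" for p
  proof (cases "p \<in> S")
    case True
    have "padic_abs p (of_nat (\<Prod>S)) = padic_abs p (of_nat p) * padic_abs p (of_nat (\<Prod>(S - {p})))"
      using True S(1) that(1) by (simp add: prod.remove padic_abs_mult)
    also have "\<dots> = 1 / real p"
      using padic_abs_of_nat_eq_1[OF that(1) not_dvd[OF that(1), of "S - {p}"]]
        padic_abs_of_nat_self[OF that(1)] by simp
    finally show ?thesis using padic_norm_less_1_imp_le[OF that(1)] small True by simp
  next
    case False
    then show ?thesis
      using padic_abs_of_nat_eq_1[OF that(1) not_dvd[OF that(1) False]] integral that
      by (simp add: Zp_iff)
  qed
  moreover have "\<not> p dvd \<Prod>S" if "prime p" "p \<in> G" for p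
    using not_dvd[of p S] that S(3) by auto
  moreover have "\<Prod>S > 0" using S(1,2) by (simp add: prime_gt_0_nat prod_pos)
  ultimately show ?thesis by (simp add: admissible_denominator_def)
qed

lemma noninvertible_cases:
  assumes "a \<in> adeles" "\<not> adele_invertible a"
  shows "snd a = 0 \<or> (\<exists>p. prime p \<and> fst a p = pof_rat p 0)
    \<or> infinite {p. prime p \<and> padic_norm p (fst a p) < 1}"
  using adele_invertibleI[OF assms(1)] assms(2) by blast

lemma admissible_denominator_unbounded:
  assumes a: "a \<in> adeles" "\<not> adele_invertible a" "snd a \<noteq> 0"
    and G: "finite G" and integral: "\<forall>p. prime p \<longrightarrow> p \<notin> G \<longrightarrow> fst a p \<in> Zp p"
  obtains D where "admissible_denominator a G D" "Z < real D"
proof -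
  obtain j :: nat where j: "Z < 2 ^ j" using real_arch_pow[of 2 Z] by auto
  consider (zero) p0 where "prime p0" "fst a p0 = pof_rat p0 0"
    | (small) "infinite {p. prime p \<and> padic_norm p (fst a p) < 1}"
    using noninvertible_cases[OF a(1,2)] a(3) by blast
  then show ?thesis
  proof cases
    case zero
    have "(2::nat) ^ j \<le> p0 ^ j" using zero(1) prime_ge_2_nat by (intro power_mono) auto
    then have "Z < real (p0 ^ j)" using j by (metis of_nat_le_iff of_nat_numeral of_nat_power less_le_trans)
    then show ?thesis using that admissible_denominator_prime_power[OF zero integral] by blast
  next
    case small
    then have "infinite ({p. prime p \<and> padic_norm p (fst a p) < 1} - G)" using G by simp
    then obtain S where S: "finite S" "card S = j" "S \<subseteq> {p. prime p \<and> padic_norm p (fst a p) < 1} - G"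
      using infinite_arbitrarily_large by blast
    have "\<forall>p\<in>S. fst a p \<in> Qp p" using S(3) a(1) by (auto simp: mem_adeles_iff)
    then have "admissible_denominator a G (\<Prod>S)"
      using S by (intro admissible_denominator_prod integral) auto
    moreover have "(2::nat) ^ j \<le> \<Prod>S"
      using S prod_mono[of S "\<lambda>_. 2::nat" id] prime_ge_2_nat by auto
    then have "Z < real (\<Prod>S)" using j by (metis of_nat_le_iff of_nat_numeral of_nat_power less_le_trans)
    ultimately show ?thesis using that by blast
  qed
qed

lemma admissible_denominator_real_approx:
  assumes a: "a \<in> adeles" "\<not> adele_invertible a"
    and G: "finite G" "\<forall>p. prime p \<longrightarrow> p \<notin> G \<longrightarrow> fst a p \<in> Zp p"
    and y: "snd a = 0 \<longrightarrow> y = 0" and \<delta>: "\<delta> > 0"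
  obtains D t where "admissible_denominator a G D"
    "\<And>q. \<bar>real_of_rat q - t\<bar> \<le> M / real D \<Longrightarrow> \<bar>real_of_rat q * snd a - y\<bar> < \<delta>"
proof (cases "snd a = 0")
  case True
  then show ?thesis using that[of 1 0] admissible_denominator_1[OF G(2)] y \<delta> by simp
next
  case False
  obtain D where D: "admissible_denominator a G D" "\<bar>snd a\<bar> * \<bar>M\<bar> / \<delta> < real D"
    using admissible_denominator_unbounded[OF a False G] by blast
  have D0: "real D > 0" using D(1) by (simp add: admissible_denominator_def)
  have "\<bar>real_of_rat q * snd a - y\<bar> < \<delta>" if q: "\<bar>real_of_rat q - y / snd a\<bar> \<le> M / real D" for q
  proof -
    have "\<bar>real_of_rat q * snd a - y\<bar> = \<bar>snd a\<bar> * \<bar>real_of_rat q - y / snd a\<bar>"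
      using False by (simp add: abs_mult[symmetric] field_simps)
    also have "\<dots> \<le> \<bar>snd a\<bar> * (\<bar>M\<bar> / real D)"
      using q D0 order_trans[OF q divide_right_mono[OF abs_ge_self]] by (intro mult_left_mono) auto
    also have "\<dots> < \<delta>" using D(2) D0 \<delta> by (simp add: field_simps)
    finally show ?thesis .
  qed
  then show ?thesis using that D(1) by blast
qed

section \<open>The closure of \<open>\<rat>\<^sup>* a\<close>\<close>

lemma rat_mult_local_approx:
  assumes a: "a \<in> adeles" and box: "restricted_open U V" "b \<in> adele_box U V"
  obtains c \<eta> where "\<And>p. prime p \<Longrightarrow> fst a p \<noteq> pof_rat p 0 \<Longrightarrow> \<eta> p > 0
    \<and> (\<forall>q. padic_abs p (q - c p) < \<eta> p \<longrightarrow> pmul p (pof_rat p q) (fst a p) \<in> U p)"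
proof -
  have "\<exists>c\<eta>. prime p \<longrightarrow> fst a p \<noteq> pof_rat p 0 \<longrightarrow> snd c\<eta> > 0
      \<and> (\<forall>q. padic_abs p (q - fst c\<eta>) < snd c\<eta> \<longrightarrow> pmul p (pof_rat p q) (fst a p) \<in> U p)" for p
  proof (cases "prime p \<and> fst a p \<noteq> pof_rat p 0")
    case True
    then have p: "prime p" "fst a p \<noteq> pof_rat p 0" by simp_all
    have "padic_open p (U p)" using box(1) p(1) unfolding restricted_open_def by simp
    moreover have "fst a p \<in> Qp p" using a p(1) by (simp add: mem_adeles_iff)
    ultimately obtain c \<eta> where "\<eta> > 0"
      "\<And>q. padic_abs p (q - c) < \<eta> \<Longrightarrow> pmul p (pof_rat p q) (fst a p) \<in> U p"
      using rat_mult_in_padic_open[OF p(1) _ adele_boxD(1)[OF box(2) p(1)] _ p(2)] by blast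
    then show ?thesis by (intro exI[of _ "(c, \<eta>)"]) simp
  qed simp
  then have "\<forall>p. \<exists>c\<eta>. prime p \<longrightarrow> fst a p \<noteq> pof_rat p 0 \<longrightarrow> snd c\<eta> > 0
      \<and> (\<forall>q. padic_abs p (q - fst c\<eta>) < snd c\<eta> \<longrightarrow> pmul p (pof_rat p q) (fst a p) \<in> U p)"
    by (rule allI)
  then obtain f where "\<forall>p. prime p \<longrightarrow> fst a p \<noteq> pof_rat p 0 \<longrightarrow> snd (f p) > 0
      \<and> (\<forall>q. padic_abs p (q - fst (f p)) < snd (f p) \<longrightarrow> pmul p (pof_rat p q) (fst a p) \<in> U p)"
    by (rule choice[THEN exE])
  then show ?thesis using that[of "\<lambda>p. snd (f p)" "\<lambda>p. fst (f p)"] by simp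
qed

lemma rat_mult_in_adele_box:
  assumes a: "a \<in> adeles"
    and zero: "\<forall>p. prime p \<longrightarrow> fst a p = pof_rat p 0 \<longrightarrow> pof_rat p 0 \<in> U p"
    and local: "\<forall>p\<in>G. pmul p (pof_rat p q) (fst a p) \<in> U p"
    and off_G: "\<forall>p. prime p \<longrightarrow> p \<notin> G \<longrightarrow> fst a p \<noteq> pof_rat p 0 \<longrightarrow>
      U p = Zp p \<and> padic_abs p q * padic_norm p (fst a p) \<le> 1"
    and real: "real_of_rat q * snd a \<in> V"
  shows "adele_mul (adele_of_rat q) a \<in> adele_box U V"
proof -
  have "pmul p (pof_rat p q) (fst a p) \<in> U p" if p: "prime p" for p
  proof (cases "p \<in> G")
    case False
    show ?thesis
    proof (cases "fst a p = pof_rat p 0")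
      case True
      then show ?thesis using pmul_pof_rat_0[OF p] zero p by simp
    next
      case False
      have "fst a p \<in> Qp p" using a p by (simp add: mem_adeles_iff)
      then show ?thesis
        using rat_mult_in_Zp[OF p] off_G p \<open>p \<notin> G\<close> False by simp
    qed
  qed (use local in simp)
  then show ?thesis
    using rat_mult_in_adeles[OF a] real unfolding adele_box_def by (simp add: fst_rat_mult snd_rat_mult)
qed

lemma rat_approx_for_noninvertible:
  fixes c :: "nat \<Rightarrow> rat" and \<eta> :: "nat \<Rightarrow> real"
  assumes a: "a \<in> adeles" "\<not> adele_invertible a"
    and G: "finite G" "\<forall>p\<in>G. prime p \<and> fst a p \<noteq> pof_rat p 0 \<and> \<eta> p > 0"
      "\<forall>p. prime p \<longrightarrow> p \<notin> G \<longrightarrow> fst a p \<in> Zp p"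
    and y: "snd a = 0 \<longrightarrow> y = 0" and \<delta>: "\<delta> > 0"
  obtains q where "q \<noteq> 0" "\<forall>p\<in>G. padic_abs p (q - c p) < \<eta> p"
    "\<forall>p. prime p \<longrightarrow> p \<notin> G \<longrightarrow> fst a p \<noteq> pof_rat p 0 \<longrightarrow> padic_abs p q * padic_norm p (fst a p) \<le> 1"
    "\<bar>real_of_rat q * snd a - y\<bar> < \<delta>"
proof -
  have G_prime: "\<forall>p\<in>G. prime p" and \<eta>: "\<forall>p\<in>G. \<eta> p > 0" using G(2) by simp_all
  obtain M where M: "\<And>D t. D > 0 \<Longrightarrow> \<forall>p\<in>G. \<not> p dvd D \<Longrightarrow> \<exists>q. q \<noteq> 0
       \<and> (\<forall>p\<in>G. padic_abs p (q - c p) < \<eta> p)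
       \<and> (\<forall>p. prime p \<longrightarrow> p \<notin> G \<longrightarrow> padic_abs p q * padic_abs p (of_nat D) \<le> 1)
       \<and> \<bar>real_of_rat q - t\<bar> \<le> M / real D"
    by (rule rat_approx_at_finitely_many_primes[OF G(1) G_prime \<eta>, where c = c]) blast
  obtain D t where D: "admissible_denominator a G D"
    and t: "\<And>q. \<bar>real_of_rat q - t\<bar> \<le> M / real D \<Longrightarrow> \<bar>real_of_rat q * snd a - y\<bar> < \<delta>"
    by (rule admissible_denominator_real_approx[OF a G(1) G(3) y \<delta>]) blast
  have "D > 0" "\<forall>p\<in>G. \<not> p dvd D" using D G(2) unfolding admissible_denominator_def by auto
  then obtain q where q: "q \<noteq> 0" "\<forall>p\<in>G. padic_abs p (q - c p) < \<eta> p"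
    "\<forall>p. prime p \<longrightarrow> p \<notin> G \<longrightarrow> padic_abs p q * padic_abs p (of_nat D) \<le> 1"
    "\<bar>real_of_rat q - t\<bar> \<le> M / real D"
    using M[of D t] by blast
  have "padic_abs p q * padic_norm p (fst a p) \<le> 1"
    if p: "prime p" "p \<notin> G" "fst a p \<noteq> pof_rat p 0" for p
  proof -
    have "padic_norm p (fst a p) \<le> padic_abs p (of_nat D)"
      using D p unfolding admissible_denominator_def by simp
    then show ?thesis using q(3) p by (meson mult_left_mono order_trans padic_abs_nonneg)
  qed
  then show ?thesis using that q(1,2) t[OF q(4)] by blast
qed

definition rat_orbit :: "adele \<Rightarrow> adele set" where
  "rat_orbit a = {adele_mul (adele_of_rat q) a | q. q \<noteq> 0}"

definition vanishes_with :: "adele \<Rightarrow> adele \<Rightarrow> bool" where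
  "vanishes_with a b \<longleftrightarrow>
     (\<forall>p. prime p \<longrightarrow> fst a p = pof_rat p 0 \<longrightarrow> fst b p = pof_rat p 0) \<and> (snd a = 0 \<longrightarrow> snd b = 0)"

lemma rat_orbit_meets_box:
  assumes a: "a \<in> adeles" "\<not> adele_invertible a"
    and b: "vanishes_with a b" and box: "restricted_open U V" "b \<in> adele_box U V"
  obtains q where "q \<noteq> 0" "adele_mul (adele_of_rat q) a \<in> adele_box U V"
proof -
  obtain \<eta> c where c\<eta>: "\<And>p. prime p \<Longrightarrow> fst a p \<noteq> pof_rat p 0 \<Longrightarrow> \<eta> p > 0
      \<and> (\<forall>q. padic_abs p (q - c p) < \<eta> p \<longrightarrow> pmul p (pof_rat p q) (fst a p) \<in> U p)"
    by (rule rat_mult_local_approx[OF a(1) box]) blast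
  define G where "G = {p. prime p \<and> fst a p \<noteq> pof_rat p 0 \<and> (U p \<noteq> Zp p \<or> fst a p \<notin> Zp p)}"
  have "G \<subseteq> {p. prime p \<and> U p \<noteq> Zp p} \<union> {p. prime p \<and> fst a p \<notin> Zp p}" unfolding G_def by blast
  then have G_fin: "finite G"
    using box(1) a(1) finite_subset unfolding restricted_open_def mem_adeles_iff by auto
  have G: "\<forall>p\<in>G. prime p \<and> fst a p \<noteq> pof_rat p 0 \<and> \<eta> p > 0" using c\<eta> unfolding G_def by simp
  have off_G: "fst a p \<in> Zp p" "U p = Zp p" if "prime p" "p \<notin> G" "fst a p \<noteq> pof_rat p 0" for p
    using that unfolding G_def by auto
  have integral: "\<forall>p. prime p \<longrightarrow> p \<notin> G \<longrightarrow> fst a p \<in> Zp p"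
  proof (intro allI impI)
    fix p assume p: "prime p" "p \<notin> G"
    show "fst a p \<in> Zp p"
      using pof_rat_0_in_Zp[OF p(1)] off_G(1)[OF p] by (cases "fst a p = pof_rat p 0") simp_all
  qed
  obtain \<delta> where \<delta>: "\<delta> > 0" "\<And>y. dist y (snd b) < \<delta> \<Longrightarrow> y \<in> V"
    using box unfolding restricted_open_def adele_box_def open_dist by blast
  have b_real: "snd a = 0 \<longrightarrow> snd b = 0" using b unfolding vanishes_with_def by simp
  obtain q where q: "q \<noteq> 0" "\<forall>p\<in>G. padic_abs p (q - c p) < \<eta> p"
    "\<forall>p. prime p \<longrightarrow> p \<notin> G \<longrightarrow> fst a p \<noteq> pof_rat p 0 \<longrightarrow> padic_abs p q * padic_norm p (fst a p) \<le> 1"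
    "\<bar>real_of_rat q * snd a - snd b\<bar> < \<delta>"
    by (rule rat_approx_for_noninvertible[OF a G_fin G integral b_real \<delta>(1), where c = c])
  have "adele_mul (adele_of_rat q) a \<in> adele_box U V"
  proof (rule rat_mult_in_adele_box[OF a(1), where G = G])
    show "\<forall>p. prime p \<longrightarrow> fst a p = pof_rat p 0 \<longrightarrow> pof_rat p 0 \<in> U p"
      using b adele_boxD(1)[OF box(2)] unfolding vanishes_with_def by metis
    show "\<forall>p\<in>G. pmul p (pof_rat p q) (fst a p) \<in> U p"
      using c\<eta> q(2) unfolding G_def by simp
    show "\<forall>p. prime p \<longrightarrow> p \<notin> G \<longrightarrow> fst a p \<noteq> pof_rat p 0 \<longrightarrow>
        U p = Zp p \<and> padic_abs p q * padic_norm p (fst a p) \<le> 1"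
      using off_G(2) q(3) by simp
    show "real_of_rat q * snd a \<in> V" using q(4) \<delta>(2) by (simp add: dist_real_def)
  qed
  then show ?thesis using that q(1) by blast
qed

lemma rat_orbit_closure_meets_box:
  assumes "x \<in> adele_topology closure_of rat_orbit a" "restricted_open U V" "x \<in> adele_box U V"
  obtains q where "adele_mul (adele_of_rat q) a \<in> adele_box U V"
  using assms openin_adele_box unfolding in_closure_of rat_orbit_def by blast

lemma rat_orbit_closure_zero_at_prime:
  assumes x: "x \<in> adele_topology closure_of rat_orbit a" and p: "prime p" "fst a p = pof_rat p 0"
  shows "fst x p = pof_rat p 0"
proof (rule ccontr)
  assume x0: "fst x p \<noteq> pof_rat p 0"
  have xA: "x \<in> adeles" using x unfolding in_closure_of topspace_adele_topology by blast
  let ?U = "(coarse_nbhd x)(p := {y \<in> Qp p. y \<noteq> pof_rat p 0})"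
  have "restricted_open ?U UNIV"
    using restricted_open_update[OF restricted_open_coarse_nbhd(1)[OF xA] p(1) padic_open_nonzero[OF p(1)]]
    by simp
  moreover have "x \<in> adele_box ?U UNIV"
    using restricted_open_coarse_nbhd(2)[OF xA] x0 xA p(1) by (simp add: adele_box_def mem_adeles_iff)
  ultimately obtain q where "adele_mul (adele_of_rat q) a \<in> adele_box ?U UNIV"
    using rat_orbit_closure_meets_box[OF x] by blast
  then have "fst (adele_mul (adele_of_rat q) a) p \<in> ?U p" by (rule adele_boxD(1)[OF _ p(1)])
  then show False using pmul_pof_rat_0[OF p(1)] p by (simp add: fst_rat_mult)
qed

lemma rat_orbit_closure_zero_at_infinity:
  assumes x: "x \<in> adele_topology closure_of rat_orbit a" and "snd a = 0"
  shows "snd x = 0"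
proof (rule ccontr)
  assume "snd x \<noteq> 0"
  have xA: "x \<in> adeles" using x unfolding in_closure_of topspace_adele_topology by blast
  have "restricted_open (coarse_nbhd x) (- {0})"
    using restricted_open_coarse_nbhd(1)[OF xA] by (simp add: restricted_open_def open_Compl)
  moreover have "x \<in> adele_box (coarse_nbhd x) (- {0})"
    using restricted_open_coarse_nbhd(2)[OF xA] \<open>snd x \<noteq> 0\<close> by (simp add: adele_box_def)
  ultimately obtain q where "adele_mul (adele_of_rat q) a \<in> adele_box (coarse_nbhd x) (- {0})"
    using rat_orbit_closure_meets_box[OF x] by blast
  then have "snd (adele_mul (adele_of_rat q) a) \<in> - {0}" by (rule adele_boxD(2))
  then show False using \<open>snd a = 0\<close> by (simp add: snd_rat_mult)
qed

lemma rat_orbit_closure_subset: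
  "adele_topology closure_of rat_orbit a \<subseteq> {b \<in> adeles. vanishes_with a b}"
proof
  fix x assume x: "x \<in> adele_topology closure_of rat_orbit a"
  then have "x \<in> adeles" unfolding in_closure_of topspace_adele_topology by blast
  then show "x \<in> {b \<in> adeles. vanishes_with a b}"
    using rat_orbit_closure_zero_at_prime[OF x] rat_orbit_closure_zero_at_infinity[OF x]
    unfolding vanishes_with_def by simp
qed

lemma rat_orbit_closure_supset:
  assumes "a \<in> adeles" "\<not> adele_invertible a"
  shows "{b \<in> adeles. vanishes_with a b} \<subseteq> adele_topology closure_of rat_orbit a"
proof
  fix b assume "b \<in> {b \<in> adeles. vanishes_with a b}"
  then have b: "b \<in> adeles" "vanishes_with a b" by simp_all
  have "\<exists>y\<in>rat_orbit a. y \<in> W" if W: "openin adele_topology W" "b \<in> W" for W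
  proof -
    obtain U V where UV: "restricted_open U V" "b \<in> adele_box U V" "adele_box U V \<subseteq> W"
      using openin_adele_topology_box[OF W] by blast
    obtain q where "q \<noteq> 0" "adele_mul (adele_of_rat q) a \<in> adele_box U V"
      using rat_orbit_meets_box[OF assms b(2) UV(1,2)] by blast
    then show ?thesis using UV(3) unfolding rat_orbit_def by blast
  qed
  then show "b \<in> adele_topology closure_of rat_orbit a"
    unfolding in_closure_of topspace_adele_topology using b(1) by blast
qed

theorem lemma3p2:
  fixes a :: adele
  assumes "a \<in> adeles" and "\<not> adele_invertible a"
  shows "adele_topology closure_of {adele_mul (adele_of_rat q) a | q. q \<noteq> 0}
         = {b \<in> adeles. (\<forall>p. prime p \<longrightarrow> fst a p = pof_rat p 0 \<longrightarrow> fst b p = pof_rat p 0)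
                       \<and> (snd a = 0 \<longrightarrow> snd b = 0)}"
  using rat_orbit_closure_subset[of a] rat_orbit_closure_supset[OF assms]
  unfolding rat_orbit_def vanishes_with_def by (rule equalityI)

end
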